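(* Let $M\subseteq H\subseteq F\subseteq\omega$ be $\Pi^1_1$ sets. Then there exists a computable function $g$ such that for every $p\in\omega$, $g(p)$ is an $\iota$-index of a c.e. effective quasi-Polish space $X=\iota(g(p))$ such that: $X$ is metrizable if $p\in M$; $X$ is Hausdorff but not metrizable if $p\in H\setminus M$; $X$ is $T_1$ but not Hausdorff if $p\in F\setminus H$; and $X$ is not $T_1$ if $p\notin F$.
   Context: Let $(W_n)$ be a standard numbering of c.e. subsets of $\omega$, $V_n=\{(i,j)\mid\langle i,j\rangle\in W_n\}$, and $t$ a computable function with $V_{t(n)}$ the transitive closure of $V_n$. For a transitive relation $\prec$ on $\omega$, an ideal is a non-empty lower, directed subset of $\omega$; $\mathcal{I}(\prec)$ is the space of ideals with topology generated by $[k]_\prec=\{I\mid k\in I\}$, an effective space with basic opens numbered by $k$. The numbering $\iota$ is defined by $\iota(n)=\mathcal{I}(V_{t(n)})$; an $\iota$-index of $X$ is an $n$ with $X=\iota(n)$. Every $\iota(n)$ is an effective quasi-Polish space; it is c.e. (overt) if $\{k\mid[k]_{V_{t(n)}}\neq\emptyset\}$ is c.e. *)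

theory Defs
  imports "HOL-Analysis.Analysis" "HOL-Library.Nat_Bijection"
begin

datatype recf = Z | S | Id nat | Cn recf "recf list" | Pr recf recf | Mn recf

inductive eval :: "recf \<Rightarrow> nat list \<Rightarrow> nat \<Rightarrow> bool" where
  eval_Z: "eval Z xs 0"
| eval_S: "eval S (x # xs) (Suc x)"
| eval_Id: "i < length xs \<Longrightarrow> eval (Id i) xs (xs ! i)"
| eval_Cn: "list_all2 (\<lambda>g y. eval g xs y) gs ys \<Longrightarrow> eval f ys z \<Longrightarrow> eval (Cn f gs) xs z"
| eval_Pr0: "eval f xs y \<Longrightarrow> eval (Pr f g) (0 # xs) y"
| eval_PrS: "eval (Pr f g) (n # xs) y \<Longrightarrow> eval g (n # y # xs) z \<Longrightarrow> eval (Pr f g) (Suc n # xs) z"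
| eval_Mn: "eval f (n # xs) 0 \<Longrightarrow> (\<forall>m<n. \<exists>y. eval f (m # xs) (Suc y)) \<Longrightarrow> eval (Mn f) xs n"
monos list_all2_mono

fun code :: "recf \<Rightarrow> nat" where
  "code Z = prod_encode (0, 0)"
| "code S = prod_encode (1, 0)"
| "code (Id i) = prod_encode (2, i)"
| "code (Cn f gs) = prod_encode (3, prod_encode (code f, list_encode (map code gs)))"
| "code (Pr f g) = prod_encode (4, prod_encode (code f, code g))"
| "code (Mn f) = prod_encode (5, code f)"

definition computable :: "(nat \<Rightarrow> nat) \<Rightarrow> bool" where
  "computable f \<longleftrightarrow> (\<exists>r. \<forall>x. eval r [x] (f x))"

definition W :: "nat \<Rightarrow> nat set" where
  "W n = {x. \<exists>r y. code r = n \<and> eval r [x] y}"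

definition ce :: "nat set \<Rightarrow> bool" where
  "ce A \<longleftrightarrow> (\<exists>n. A = W n)"

text \<open>Pi^1_1 subsets of omega (Kleene normal form with a computable matrix).\<close>
definition pi11 :: "nat set \<Rightarrow> bool" where
  "pi11 A \<longleftrightarrow> (\<exists>R. computable R \<and>
     (\<forall>n. n \<in> A \<longleftrightarrow> (\<forall>f::nat \<Rightarrow> nat. \<exists>m. R (prod_encode (n, list_encode (map f [0..<m]))) = 0)))"

definition V :: "nat \<Rightarrow> (nat \<times> nat) set" where
  "V n = {(i, j). prod_encode (i, j) \<in> W n}"

definition is_ideal :: "(nat \<times> nat) set \<Rightarrow> nat set \<Rightarrow> bool" where
  "is_ideal R I \<longleftrightarrow> I \<noteq> {}
     \<and> (\<forall>k\<in>I. \<forall>j. (j, k) \<in> R \<longrightarrow> j \<in> I)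
     \<and> (\<forall>a\<in>I. \<forall>b\<in>I. \<exists>c\<in>I. (a, c) \<in> R \<and> (b, c) \<in> R)"

definition basic_open :: "(nat \<times> nat) set \<Rightarrow> nat \<Rightarrow> nat set set" where
  "basic_open R k = {I. is_ideal R I \<and> k \<in> I}"

definition ideal_space :: "(nat \<times> nat) set \<Rightarrow> nat set topology" where
  "ideal_space R = topology_generated_by (range (basic_open R))"

text \<open>iota n = I(V_{t(n)}) where V_{t(n)} is the transitive closure of V_n.\<close>
definition iota :: "nat \<Rightarrow> nat set topology" where
  "iota n = ideal_space ((V n)\<^sup>+)"

definition iota_ce :: "nat \<Rightarrow> bool" where
  "iota_ce n \<longleftrightarrow> ce {k. basic_open ((V n)\<^sup>+) k \<noteq> {}}"

end

theory Submission
  imports Defs "HOL-Library.Sublist"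
begin

text \<open>A \<open>\<Pi>\<^sup>1\<^sub>1\<close> set consists of the \<open>p\<close> for which a computable tree of finite sequences has
  no infinite branch. For each \<open>p\<close> we build, decidably in \<open>p\<close>, a transitive relation on codes whose
  ideal space glues one gadget per tree. A branch of the tree for \<open>F\<close> gives an ideal strictly
  below the principal ideal of a maximal point, so the space is not \<open>T\<^sub>1\<close>. The tree for \<open>H\<close>
  is embedded twice with common upper bounds at every finite stage, so a branch gives two ideals
  that cannot be separated. The tree for \<open>M\<close> is embedded once and then in copies
  \<open>n = 0, 1, \<dots>\<close>, the \<open>n\<close>-th copy being joined to the original below level \<open>n\<close>; along a branch
  \<open>x\<close>, the ideal of the original cannot be separated from the closed set of ideals of the copies,
  so the space is not regular. Every ideal not arising from a branch is the principal ideal of a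
  maximal point, hence isolated, and distinct ideals along branches of the tree for \<open>M\<close> or its
  copies contain incompatible points. So the space is \<open>T\<^sub>1\<close> if the tree for \<open>F\<close> has no branch,
  Hausdorff if moreover the tree for \<open>H\<close> has none, and discrete if no tree has a branch.\<close>

section \<open>Partial recursive functions\<close>

inductive_cases evalZ_E: "eval Z xs y"
inductive_cases evalS_E: "eval S xs y"
inductive_cases evalId_E: "eval (recf.Id i) xs y"
inductive_cases evalCn_E: "eval (Cn f gs) xs y"
inductive_cases evalPr_E: "eval (Pr f g) xs y"
inductive_cases evalMn_E: "eval (Mn f) xs y"

lemma list_all2_functional:
  assumes "list_all2 (\<lambda>g y. P g y \<and> (\<forall>z. P g z \<longrightarrow> y = z)) gs ys" and "list_all2 P gs ys'"
  shows "ys = ys'"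
  using assms
proof (induction gs arbitrary: ys ys')
  case (Cons a gs)
  from Cons.prems obtain y ys0 y' ys0' where "ys = y # ys0" "ys' = y' # ys0'"
    by (auto simp: list_all2_Cons1)
  then show ?case using Cons.prems Cons.IH by auto
qed simp

lemma eval_deterministic: "eval r xs y \<Longrightarrow> eval r xs z \<Longrightarrow> y = z"
proof (induction arbitrary: z rule: eval.induct)
  case (eval_Z xs) from eval_Z.prems show ?case by (rule evalZ_E) simp
next
  case (eval_S x xs) from eval_S.prems show ?case by (rule evalS_E) simp
next
  case (eval_Id i xs) from eval_Id.prems show ?case by (rule evalId_E) simp
next
  case (eval_Cn xs gs ys f z0)
  from eval_Cn.prems obtain ys' where a: "list_all2 (\<lambda>g y. eval g xs y) gs ys'" "eval f ys' z"
    by (rule evalCn_E) simp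
  have "ys = ys'" using list_all2_functional[OF _ a(1)] eval_Cn.IH(1)
    by (simp add: list_all2_mono)
  then show ?case using eval_Cn.IH(2) a(2) by simp
next
  case (eval_Pr0 f xs y g)
  from eval_Pr0.prems have "eval f xs z" by (rule evalPr_E) simp_all
  then show ?case using eval_Pr0.IH by simp
next
  case (eval_PrS f g n xs y z0)
  from eval_PrS.prems obtain y' where "eval (Pr f g) (n # xs) y'" "eval g (n # y' # xs) z"
    by (rule evalPr_E) simp_all
  then show ?case using eval_PrS.IH by simp
next
  case (eval_Mn f n xs)
  from eval_Mn.prems have b: "eval f (z # xs) 0" "\<forall>m<z. \<exists>y. eval f (m # xs) (Suc y)"
    by (rule evalMn_E, simp)+
  show ?case
  proof (rule ccontr)
    assume "n \<noteq> z"
    then have "n < z \<or> z < n" by arith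
    then show False
    proof
      assume "n < z"
      then obtain y where "eval f (n # xs) (Suc y)" using b by blast
      then have "0 = Suc y" using eval_Mn.IH(1) by blast
      then show False by simp
    next
      assume "z < n"
      then obtain y where "eval f (z # xs) (Suc y)" "\<forall>w. eval f (z # xs) w \<longrightarrow> Suc y = w"
        using eval_Mn.IH(2) by blast
      then have "Suc y = 0" using b(1) by blast
      then show False by simp
    qed
  qed
qed

lemma inj_code: "inj code"
proof (rule injI)
  show "code r = code r' \<Longrightarrow> r = r'" for r r'
  proof (induction r arbitrary: r')
    case Z then show ?case by (cases r') (auto simp: prod_encode_eq)
  next
    case S then show ?case by (cases r') (auto simp: prod_encode_eq)
  next
    case (Id x) then show ?case by (cases r') (auto simp: prod_encode_eq)
  next
    case (Cn f gs)
    then show ?case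
    proof (cases r')
      case (Cn f' gs')
      with Cn.prems have 1: "code f = code f'" and 2: "map code gs = map code gs'"
        by (auto simp: prod_encode_eq list_encode_eq)
      have "f = f'" using Cn.IH(1) 1 by blast
      moreover have "gs = gs'"
        using 2 Cn.IH(2)
      proof (induction gs arbitrary: gs')
        case Nil then show ?case by simp
      next
        case (Cons a gs) then show ?case by (cases gs') auto
      qed
      ultimately show ?thesis using Cn by simp
    qed (auto simp: prod_encode_eq)
  next
    case (Pr f g) then show ?case by (cases r') (auto simp: prod_encode_eq)
  next
    case (Mn f) then show ?case by (cases r') (auto simp: prod_encode_eq)
  qed
qed

lemma W_code: "W (code r) = {x. \<exists>y. eval r [x] y}"
  unfolding W_def using inj_code by (blast dest: injD)

definition rec_fn :: "nat \<Rightarrow> (nat list \<Rightarrow> nat) \<Rightarrow> bool" where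
  "rec_fn k f \<longleftrightarrow> (\<exists>r. \<forall>xs. length xs = k \<longrightarrow> eval r xs (f xs))"

lemma rec_fn_cong: "rec_fn k f \<Longrightarrow> (\<And>xs. length xs = k \<Longrightarrow> f xs = g xs) \<Longrightarrow> rec_fn k g"
  unfolding rec_fn_def by metis

lemma rec_fn_proj: "i < k \<Longrightarrow> rec_fn k (\<lambda>xs. xs ! i)"
  unfolding rec_fn_def by (auto intro!: exI[of _ "recf.Id i"] eval_Id)

lemma rec_fn_const: "rec_fn k (\<lambda>xs. n)"
proof (induction n)
  case 0 then show ?case unfolding rec_fn_def by (auto intro: eval_Z)
next
  case (Suc n)
  then obtain r where r: "\<forall>xs. length xs = k \<longrightarrow> eval r xs n" unfolding rec_fn_def by blast
  have "eval (Cn S [r]) xs (Suc n)" if "length xs = k" for xs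
    by (rule eval_Cn[where ys="[n]"]) (auto simp: r that intro: eval_S)
  then show ?case unfolding rec_fn_def by blast
qed

lemma rec_fn_comp:
  assumes F: "rec_fn m F" and G: "\<And>i. i < m \<Longrightarrow> rec_fn k (G i)"
  shows "rec_fn k (\<lambda>xs. F (map (\<lambda>i. G i xs) [0..<m]))"
proof -
  obtain rF where rF: "\<forall>ys. length ys = m \<longrightarrow> eval rF ys (F ys)" using F unfolding rec_fn_def by blast
  have "\<forall>i. \<exists>r. i < m \<longrightarrow> (\<forall>xs. length xs = k \<longrightarrow> eval r xs (G i xs))"
    using G unfolding rec_fn_def by blast
  then obtain rs where rs: "\<And>i xs. i < m \<Longrightarrow> length xs = k \<Longrightarrow> eval (rs i) xs (G i xs)" by metis
  have "eval (Cn rF (map rs [0..<m])) xs (F (map (\<lambda>i. G i xs) [0..<m]))" if "length xs = k" for xs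
  proof (rule eval_Cn)
    show "list_all2 (\<lambda>g y. eval g xs y) (map rs [0..<m]) (map (\<lambda>i. G i xs) [0..<m])"
      by (auto simp: list_all2_conv_all_nth rs that)
    show "eval rF (map (\<lambda>i. G i xs) [0..<m]) (F (map (\<lambda>i. G i xs) [0..<m]))"
      using rF by simp
  qed
  then show ?thesis unfolding rec_fn_def by blast
qed

lemma rec_fn_comp1: "rec_fn 1 F \<Longrightarrow> rec_fn k G \<Longrightarrow> rec_fn k (\<lambda>xs. F [G xs])"
  using rec_fn_comp[of 1 F k "\<lambda>i. G"] by simp

lemma rec_fn_comp2: "rec_fn 2 F \<Longrightarrow> rec_fn k G1 \<Longrightarrow> rec_fn k G2 \<Longrightarrow> rec_fn k (\<lambda>xs. F [G1 xs, G2 xs])"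
  using rec_fn_comp[of 2 F k "\<lambda>i. if i = 0 then G1 else G2"] by (simp add: upt_rec)

lemma rec_fn_comp3:
  "rec_fn 3 F \<Longrightarrow> rec_fn k G1 \<Longrightarrow> rec_fn k G2 \<Longrightarrow> rec_fn k G3 \<Longrightarrow> rec_fn k (\<lambda>xs. F [G1 xs, G2 xs, G3 xs])"
  using rec_fn_comp[of 3 F k "\<lambda>i. if i = 0 then G1 else if i = 1 then G2 else G3"]
  by (simp add: upt_rec)

lemma rec_fn_cons_subst: "rec_fn (Suc k) F \<Longrightarrow> rec_fn k B \<Longrightarrow> rec_fn k (\<lambda>xs. F (B xs # xs))"
proof -
  assume F: "rec_fn (Suc k) F" and B: "rec_fn k B"
  have "rec_fn k (\<lambda>xs. F (map (\<lambda>i. (if i = 0 then B else (\<lambda>xs. xs ! (i - 1))) xs) [0..<Suc k]))"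
    by (rule rec_fn_comp[OF F]) (auto intro: B rec_fn_proj)
  then show ?thesis
  proof (rule rec_fn_cong)
    fix xs :: "nat list" assume "length xs = k"
    then have "map (\<lambda>i. (if i = 0 then B else (\<lambda>xs. xs ! (i - 1))) xs) [0..<Suc k] = B xs # xs"
      by (intro nth_equalityI) (auto simp del: upt_Suc simp: nth_Cons')
    then show "F (map (\<lambda>i. (if i = 0 then B else (\<lambda>xs. xs ! (i - 1))) xs) [0..<Suc k]) = F (B xs # xs)"
      by simp
  qed
qed

lemma rec_fn_drop_snd: "rec_fn (Suc k) F \<Longrightarrow> rec_fn (Suc (Suc k)) (\<lambda>ys. F (hd ys # drop 2 ys))"
proof -
  assume F: "rec_fn (Suc k) F"
  have "rec_fn (Suc (Suc k)) (\<lambda>ys. F (map (\<lambda>i. (\<lambda>ys. ys ! (if i = 0 then 0 else Suc i)) ys) [0..<Suc k]))"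
    by (rule rec_fn_comp[OF F]) (auto intro: rec_fn_proj)
  then show ?thesis
  proof (rule rec_fn_cong)
    fix ys :: "nat list" assume l: "length ys = Suc (Suc k)"
    then have "hd ys = ys ! 0" by (cases ys) auto
    with l have "map (\<lambda>i. ys ! (if i = 0 then 0 else Suc i)) [0..<Suc k] = hd ys # drop 2 ys"
      by (intro nth_equalityI) (auto simp del: upt_Suc simp: nth_Cons' hd_conv_nth)
    then show "F (map (\<lambda>i. (\<lambda>ys. ys ! (if i = 0 then 0 else Suc i)) ys) [0..<Suc k]) = F (hd ys # drop 2 ys)"
      by simp
  qed
qed

fun prim_rec :: "(nat list \<Rightarrow> nat) \<Rightarrow> (nat list \<Rightarrow> nat) \<Rightarrow> nat \<Rightarrow> nat list \<Rightarrow> nat" where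
  "prim_rec F G 0 xs = F xs"
| "prim_rec F G (Suc n) xs = G (n # prim_rec F G n xs # xs)"

lemma rec_fn_prim_rec:
  assumes F: "rec_fn k F" and G: "rec_fn (Suc (Suc k)) G"
  shows "rec_fn (Suc k) (\<lambda>xs. prim_rec F G (hd xs) (tl xs))"
proof -
  obtain rF where rF: "\<forall>ys. length ys = k \<longrightarrow> eval rF ys (F ys)" using F unfolding rec_fn_def by blast
  obtain rG where rG: "\<forall>ys. length ys = Suc (Suc k) \<longrightarrow> eval rG ys (G ys)" using G unfolding rec_fn_def by blast
  have "eval (Pr rF rG) (n # xs) (prim_rec F G n xs)" if "length xs = k" for n xs
  proof (induction n)
    case 0 then show ?case using rF that by (auto intro: eval_Pr0)
  next
    case (Suc n) then show ?case using rG that by (auto intro: eval_PrS)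
  qed
  then have "eval (Pr rF rG) xs (prim_rec F G (hd xs) (tl xs))" if "length xs = Suc k" for xs
    using that by (cases xs) auto
  then show ?thesis unfolding rec_fn_def by blast
qed

lemma rec_fn_prim_rec_eq:
  assumes F: "rec_fn k F" and G: "rec_fn (Suc (Suc k)) G"
    and H: "\<And>n xs. length xs = k \<Longrightarrow> prim_rec F G n xs = H (n # xs)"
  shows "rec_fn (Suc k) H"
  using rec_fn_prim_rec[OF F G]
proof (rule rec_fn_cong)
  fix xs :: "nat list" assume "length xs = Suc k"
  then show "prim_rec F G (hd xs) (tl xs) = H xs" using H[of "tl xs" "hd xs"] by (cases xs) auto
qed

lemma list_length1_eq: "length xs = 1 \<Longrightarrow> xs = [xs!0]"
  by (cases xs) auto
lemma rec_fn_Suc1: "rec_fn 1 (\<lambda>xs. Suc (xs ! 0))"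
  unfolding rec_fn_def
proof (intro exI allI impI)
  fix xs :: "nat list" assume "length xs = 1"
  then have "xs = [xs!0]" by (rule list_length1_eq)
  then show "eval S xs (Suc (xs ! 0))" by (metis eval_S)
qed

lemma rec_fn_Suc: "rec_fn k G \<Longrightarrow> rec_fn k (\<lambda>xs. Suc (G xs))"
  using rec_fn_comp1[OF rec_fn_Suc1] by simp

lemma rec_fn_add2: "rec_fn 2 (\<lambda>xs. xs ! 0 + xs ! 1)"
proof -
  have "rec_fn (Suc (Suc 0)) (\<lambda>xs. xs ! 0 + xs ! 1)"
  proof (rule rec_fn_prim_rec_eq[where F="\<lambda>ys. ys ! 0" and G="\<lambda>ys. Suc (ys ! 1)"])
    show "prim_rec (\<lambda>ys. ys ! 0) (\<lambda>ys. Suc (ys ! 1)) n xs = (n # xs) ! 0 + (n # xs) ! 1"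
      for n and xs :: "nat list"
      by (induction n) auto
  qed (auto intro: rec_fn_proj rec_fn_Suc)
  then show ?thesis by (simp only: numeral_2_eq_2)
qed

lemma rec_fn_add: "rec_fn k G \<Longrightarrow> rec_fn k H \<Longrightarrow> rec_fn k (\<lambda>xs. G xs + H xs)"
  using rec_fn_comp2[OF rec_fn_add2] by simp

lemma rec_fn_diff2: "rec_fn 2 (\<lambda>xs. xs ! 1 - xs ! 0)"
proof -
  have pred: "rec_fn (Suc 0) (\<lambda>xs. xs ! 0 - 1)"
  proof (rule rec_fn_prim_rec_eq[where F="\<lambda>ys. 0" and G="\<lambda>ys. ys ! 0"])
    show "prim_rec (\<lambda>ys. 0) (\<lambda>ys. ys ! 0) n xs = (n # xs) ! 0 - 1" for n and xs :: "nat list"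
      by (cases n) auto
  qed (auto intro: rec_fn_proj rec_fn_const)
  have "rec_fn (Suc (Suc 0)) (\<lambda>xs. xs ! 1 - xs ! 0)"
  proof (rule rec_fn_prim_rec_eq[where F="\<lambda>ys. ys ! 0" and G="\<lambda>ys. ys ! 1 - 1"])
    show "rec_fn (Suc (Suc (Suc 0))) (\<lambda>ys. ys ! 1 - 1)"
      using rec_fn_comp1[OF pred[unfolded One_nat_def[symmetric]] rec_fn_proj[of 1]] by simp
    show "prim_rec (\<lambda>ys. ys ! 0) (\<lambda>ys. ys ! 1 - 1) n xs = (n # xs) ! 1 - (n # xs) ! 0"
      for n and xs :: "nat list"
      by (induction n) auto
  qed (auto intro: rec_fn_proj)
  then show ?thesis by (simp only: numeral_2_eq_2)
qed

lemma rec_fn_diff: "rec_fn k G \<Longrightarrow> rec_fn k H \<Longrightarrow> rec_fn k (\<lambda>xs. G xs - H xs)"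
  using rec_fn_comp2[OF rec_fn_diff2, of k H G] by simp

lemma rec_fn_if_zero3: "rec_fn 3 (\<lambda>xs. if xs ! 0 = 0 then xs ! 1 else xs ! 2)"
proof -
  have "rec_fn (Suc (Suc (Suc 0))) (\<lambda>xs. if xs ! 0 = 0 then xs ! 1 else xs ! 2)"
  proof (rule rec_fn_prim_rec_eq[where F="\<lambda>ys. ys ! 0" and G="\<lambda>ys. ys ! 3"])
    show "prim_rec (\<lambda>ys. ys ! 0) (\<lambda>ys. ys ! 3) n xs
        = (if (n # xs) ! 0 = 0 then (n # xs) ! 1 else (n # xs) ! 2)"
      if "length xs = Suc (Suc 0)" for n and xs :: "nat list"
      using that by (cases n; cases xs) auto
  qed (auto intro: rec_fn_proj)
  then show ?thesis by (simp only: numeral_3_eq_3)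
qed

lemma rec_fn_if_zero:
  assumes "rec_fn k C" "rec_fn k A" "rec_fn k B"
  shows "rec_fn k (\<lambda>xs. if C xs = 0 then A xs else B xs)"
  by (rule rec_fn_cong[OF rec_fn_comp3[OF rec_fn_if_zero3 assms]]) (simp add: nth_Cons')

definition rec_pred :: "nat \<Rightarrow> (nat list \<Rightarrow> bool) \<Rightarrow> bool" where
  "rec_pred k P \<longleftrightarrow> rec_fn k (\<lambda>xs. if P xs then 0 else 1)"

lemma rec_fn_if: "rec_pred k P \<Longrightarrow> rec_fn k A \<Longrightarrow> rec_fn k B \<Longrightarrow> rec_fn k (\<lambda>xs. if P xs then A xs else B xs)"
  unfolding rec_pred_def by (rule rec_fn_cong[OF rec_fn_if_zero[of k "\<lambda>xs. if P xs then 0 else 1" A B]]) auto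

lemma rec_pred_cong: "rec_pred k P \<Longrightarrow> (\<And>xs. length xs = k \<Longrightarrow> P xs = Q xs) \<Longrightarrow> rec_pred k Q"
  unfolding rec_pred_def by (erule rec_fn_cong) auto

lemma rec_pred_eq: "rec_fn k A \<Longrightarrow> rec_fn k B \<Longrightarrow> rec_pred k (\<lambda>xs. A xs = B xs)"
  unfolding rec_pred_def
  by (rule rec_fn_cong[OF rec_fn_if_zero[of k "\<lambda>xs. (A xs - B xs) + (B xs - A xs)" "\<lambda>_. 0" "\<lambda>_. 1"]])
     (auto intro: rec_fn_add rec_fn_diff rec_fn_const)

lemma rec_pred_le: "rec_fn k A \<Longrightarrow> rec_fn k B \<Longrightarrow> rec_pred k (\<lambda>xs. A xs \<le> B xs)"
  unfolding rec_pred_def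
  by (rule rec_fn_cong[OF rec_fn_if_zero[of k "\<lambda>xs. A xs - B xs" "\<lambda>_. 0" "\<lambda>_. 1"]])
     (auto intro: rec_fn_diff rec_fn_const)

lemma rec_pred_less: "rec_fn k A \<Longrightarrow> rec_fn k B \<Longrightarrow> rec_pred k (\<lambda>xs. A xs < B xs)"
  using rec_pred_le[of k "\<lambda>xs. Suc (A xs)" B] by (simp add: rec_fn_Suc Suc_le_eq)

lemma rec_pred_conj: "rec_pred k P \<Longrightarrow> rec_pred k Q \<Longrightarrow> rec_pred k (\<lambda>xs. P xs \<and> Q xs)"
  unfolding rec_pred_def
  by (rule rec_fn_cong[OF rec_fn_if[of k P "\<lambda>xs. if Q xs then 0 else 1" "\<lambda>_. 1"]])
     (auto intro: rec_fn_const simp: rec_pred_def)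

lemma rec_pred_disj: "rec_pred k P \<Longrightarrow> rec_pred k Q \<Longrightarrow> rec_pred k (\<lambda>xs. P xs \<or> Q xs)"
  unfolding rec_pred_def
  by (rule rec_fn_cong[OF rec_fn_if[of k P "\<lambda>_. 0" "\<lambda>xs. if Q xs then 0 else 1"]])
     (auto intro: rec_fn_const simp: rec_pred_def)

lemma rec_pred_not: "rec_pred k P \<Longrightarrow> rec_pred k (\<lambda>xs. \<not> P xs)"
  unfolding rec_pred_def
  by (rule rec_fn_cong[OF rec_fn_if[of k P "\<lambda>_. 1" "\<lambda>_. 0"]])
     (auto intro: rec_fn_const simp: rec_pred_def)

lemma rec_pred_cons_subst: "rec_pred (Suc k) P \<Longrightarrow> rec_fn k B \<Longrightarrow> rec_pred k (\<lambda>xs. P (B xs # xs))"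
  unfolding rec_pred_def using rec_fn_cons_subst by fast

lemma rec_pred_all_less_hd:
  assumes Q: "rec_pred (Suc k) Q"
  shows "rec_pred (Suc k) (\<lambda>ys. \<forall>i<hd ys. Q (i # tl ys))"
proof -
  define G where "G = (\<lambda>ys::nat list. if ys ! 1 = 0 \<and> Q (hd ys # drop 2 ys) then 0 else (1::nat))"
  have "rec_fn (Suc k) (\<lambda>xs. prim_rec (\<lambda>_. 0) G (hd xs) (tl xs))"
  proof (rule rec_fn_prim_rec[OF rec_fn_const])
    have d: "rec_pred (Suc (Suc k)) (\<lambda>ys. Q (hd ys # drop 2 ys))"
      using rec_fn_drop_snd[OF Q[unfolded rec_pred_def]] unfolding rec_pred_def by simp
    show "rec_fn (Suc (Suc k)) G" unfolding G_def
      by (rule rec_fn_if[OF rec_pred_conj[OF rec_pred_eq d]]) (auto intro: rec_fn_proj rec_fn_const)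
  qed
  moreover have "prim_rec (\<lambda>_. 0) G n xs = (if \<forall>i<n. Q (i # xs) then 0 else 1)" for n xs
    by (induction n) (auto simp: G_def less_Suc_eq)
  ultimately show ?thesis unfolding rec_pred_def by (rule rec_fn_cong)
qed

lemma rec_pred_all_less:
  assumes "rec_pred (Suc k) Q" "rec_fn k B" "\<And>i xs. length xs = k \<Longrightarrow> Q (i # xs) = P i xs"
  shows "rec_pred k (\<lambda>xs. \<forall>i<B xs. P i xs)"
  using rec_pred_cons_subst[OF rec_pred_all_less_hd[OF assms(1)] assms(2)]
  by (rule rec_pred_cong) (simp add: assms(3))

fun bounded_min :: "(nat list \<Rightarrow> nat) \<Rightarrow> nat \<Rightarrow> nat list \<Rightarrow> nat" where
  "bounded_min F 0 xs = 0"
| "bounded_min F (Suc n) xs =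
    (if bounded_min F n xs < n then bounded_min F n xs else if F (n # xs) = 0 then n else Suc n)"

lemma bounded_min_spec: "bounded_min F n xs \<le> n \<and> (bounded_min F n xs < n \<longrightarrow> F (bounded_min F n xs # xs) = 0)
   \<and> (\<forall>j<bounded_min F n xs. F (j # xs) \<noteq> 0)"
  by (induction n) (auto simp: less_Suc_eq)

lemma bounded_min_eqI: "m < n \<Longrightarrow> F (m # xs) = 0 \<Longrightarrow> (\<forall>j<m. F (j # xs) \<noteq> 0) \<Longrightarrow> bounded_min F n xs = m"
  using bounded_min_spec[of F n xs] by (metis linorder_neqE_nat order_le_less)

lemma rec_fn_bounded_min:
  assumes F: "rec_fn (Suc k) F"
  shows "rec_fn (Suc k) (\<lambda>ys. bounded_min F (hd ys) (tl ys))"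
proof -
  define G where "G = (\<lambda>ys::nat list.
    if ys ! 1 < ys ! 0 then ys ! 1 else if F (hd ys # drop 2 ys) = 0 then ys ! 0 else Suc (ys ! 0))"
  have "rec_fn (Suc k) (\<lambda>xs. prim_rec (\<lambda>_. 0) G (hd xs) (tl xs))"
  proof (rule rec_fn_prim_rec[OF rec_fn_const])
    have d: "rec_fn (Suc (Suc k)) (\<lambda>ys. F (hd ys # drop 2 ys))"
      using rec_fn_drop_snd[OF F] by simp
    show "rec_fn (Suc (Suc k)) G" unfolding G_def
      by (intro rec_fn_if rec_pred_less rec_pred_eq d rec_fn_proj rec_fn_const rec_fn_Suc) auto
  qed
  moreover have "prim_rec (\<lambda>_. 0) G n xs = bounded_min F n xs" for n xs
    by (induction n) (auto simp: G_def)
  ultimately show ?thesis by simp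
qed

lemma rec_fn_bounded_min_subst:
  assumes "rec_fn (Suc k) F" "rec_fn k B"
  shows "rec_fn k (\<lambda>xs. bounded_min F (B xs) xs)"
  using rec_fn_cons_subst[OF rec_fn_bounded_min[OF assms(1)] assms(2)] by simp

section \<open>Computability of the pair and list codings\<close>

lemma rec_fn_triangle1: "rec_fn 1 (\<lambda>xs. triangle (xs ! 0))"
proof -
  have "rec_fn (Suc 0) (\<lambda>xs. triangle (xs ! 0))"
  proof (rule rec_fn_prim_rec_eq[where F="\<lambda>ys. 0" and G="\<lambda>ys. ys ! 1 + Suc (ys ! 0)"])
    show "prim_rec (\<lambda>ys. 0) (\<lambda>ys. ys ! 1 + Suc (ys ! 0)) n xs = triangle ((n # xs) ! 0)"
      for n and xs :: "nat list"
      by (induction n) auto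
  qed (intro rec_fn_const rec_fn_add rec_fn_Suc rec_fn_proj; simp)+
  then show ?thesis by simp
qed

lemma rec_fn_triangle: "rec_fn k A \<Longrightarrow> rec_fn k (\<lambda>xs. triangle (A xs))"
  using rec_fn_comp1[OF rec_fn_triangle1] by simp

lemma rec_fn_prod_encode:
  assumes "rec_fn k A" "rec_fn k B"
  shows "rec_fn k (\<lambda>xs. prod_encode (A xs, B xs))"
proof -
  have "(\<lambda>xs. prod_encode (A xs, B xs)) = (\<lambda>xs. triangle (A xs + B xs) + A xs)"
    by (simp add: prod_encode_def)
  moreover have "rec_fn k (\<lambda>xs. triangle (A xs + B xs) + A xs)"
    by (intro rec_fn_add rec_fn_triangle assms)
  ultimately show ?thesis by simp
qed

definition diag_index :: "nat \<Rightarrow> nat" where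
  "diag_index n = bounded_min (\<lambda>ys. Suc (ys ! 1) - triangle (Suc (ys ! 0))) (Suc n) [n]"

lemma le_triangle: "n \<le> triangle n"
  by (induction n) auto

lemma diag_index_spec: "triangle (diag_index n) \<le> n \<and> n < triangle (Suc (diag_index n))"
proof -
  define s where "s = (LEAST s. n < triangle (Suc s))"
  have ex: "n < triangle (Suc n)" using le_triangle[of n] by simp
  have s1: "n < triangle (Suc s)" unfolding s_def by (rule LeastI[of _ n]) (rule ex)
  have s2: "\<And>j. j < s \<Longrightarrow> \<not> n < triangle (Suc j)" unfolding s_def by (rule not_less_Least)
  have sn: "s \<le> n" unfolding s_def by (rule Least_le) (rule ex)
  have "diag_index n = s" unfolding diag_index_def
  proof (rule bounded_min_eqI)
    show "s < Suc n" using sn by simp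
    show "Suc ([s, n] ! 1) - triangle (Suc ([s, n] ! 0)) = 0" using s1 by simp
    show "\<forall>j<s. Suc ([j, n] ! 1) - triangle (Suc ([j, n] ! 0)) \<noteq> 0"
    proof (intro allI impI)
      fix j assume "j < s"
      then have "\<not> n < triangle (Suc j)" by (rule s2)
      then show "Suc ([j, n] ! 1) - triangle (Suc ([j, n] ! 0)) \<noteq> 0" by simp
    qed
  qed
  moreover have "triangle s \<le> n"
  proof (cases s)
    case 0 then show ?thesis by simp
  next
    case (Suc j) then show ?thesis using s2[of j] by simp
  qed
  ultimately show ?thesis using s1 by simp
qed

lemma prod_decode_diag_index:
  "prod_decode n = (n - triangle (diag_index n), diag_index n - (n - triangle (diag_index n)))"
proof -
  let ?s = "diag_index n"
  have a: "triangle ?s \<le> n" "n < triangle ?s + Suc ?s" using diag_index_spec[of n] by auto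
  have "prod_encode (n - triangle ?s, ?s - (n - triangle ?s)) = n"
    unfolding prod_encode_def using a by simp
  then show ?thesis by (metis prod_encode_inverse)
qed

lemma rec_fn_diag_index1: "rec_fn 1 (\<lambda>xs. diag_index (xs ! 0))"
proof -
  have "rec_fn 1 (\<lambda>xs. bounded_min (\<lambda>ys. Suc (ys ! 1) - triangle (Suc (ys ! 0))) (Suc (xs ! 0)) xs)"
    by (rule rec_fn_bounded_min_subst; (intro rec_fn_diff rec_fn_Suc rec_fn_triangle rec_fn_proj)?; simp)
  then show ?thesis
  proof (rule rec_fn_cong)
    fix xs :: "nat list" assume "length xs = 1"
    then have "xs = [xs ! 0]" by (rule list_length1_eq)
    then show "bounded_min (\<lambda>ys. Suc (ys ! 1) - triangle (Suc (ys ! 0))) (Suc (xs ! 0)) xs = diag_index (xs ! 0)"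
      unfolding diag_index_def by metis
  qed
qed

lemma rec_fn_diag_index: "rec_fn k A \<Longrightarrow> rec_fn k (\<lambda>xs. diag_index (A xs))"
  using rec_fn_comp1[OF rec_fn_diag_index1] by simp

lemma rec_fn_fst_prod_decode: "rec_fn k A \<Longrightarrow> rec_fn k (\<lambda>xs. fst (prod_decode (A xs)))"
  by (subst prod_decode_diag_index) (simp add: rec_fn_diff rec_fn_triangle rec_fn_diag_index)

lemma rec_fn_snd_prod_decode: "rec_fn k A \<Longrightarrow> rec_fn k (\<lambda>xs. snd (prod_decode (A xs)))"
  by (subst prod_decode_diag_index) (simp add: rec_fn_diff rec_fn_triangle rec_fn_diag_index)

definition hd_code :: "nat \<Rightarrow> nat" where "hd_code c = fst (prod_decode (c - 1))"
definition tl_code :: "nat \<Rightarrow> nat" where "tl_code c = snd (prod_decode (c - 1))"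

lemma hd_code_Cons[simp]: "hd_code (list_encode (x # xs)) = x" by (simp add: hd_code_def)
lemma tl_code_Cons[simp]: "tl_code (list_encode (x # xs)) = list_encode xs" by (simp add: tl_code_def)
lemma prod_decode_0: "prod_decode 0 = (0, 0)"
proof -
  have "prod_encode (0, 0) = 0" by (simp add: prod_encode_def)
  then show ?thesis by (metis prod_encode_inverse)
qed
lemma rec_fn_hd_code: "rec_fn k A \<Longrightarrow> rec_fn k (\<lambda>xs. hd_code (A xs))"
  unfolding hd_code_def by (intro rec_fn_fst_prod_decode rec_fn_diff rec_fn_const)
lemma rec_fn_tl_code: "rec_fn k A \<Longrightarrow> rec_fn k (\<lambda>xs. tl_code (A xs))"
  unfolding tl_code_def by (intro rec_fn_snd_prod_decode rec_fn_diff rec_fn_const)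

lemma tl_code_funpow: "(tl_code ^^ i) (list_encode xs) = list_encode (drop i xs)"
proof (induction i arbitrary: xs)
  case 0 then show ?case by simp
next
  case (Suc i)
  have "(tl_code ^^ Suc i) (list_encode xs) = (tl_code ^^ i) (tl_code (list_encode xs))"
    by (simp add: funpow_swap1)
  also have "tl_code (list_encode xs) = list_encode (drop 1 xs)"
    by (cases xs) (simp_all add: tl_code_def prod_decode_0)
  finally show ?case using Suc by simp
qed

lemma rec_fn_tl_code_funpow2: "rec_fn 2 (\<lambda>xs. (tl_code ^^ (xs ! 0)) (xs ! 1))"
proof -
  have "rec_fn (Suc (Suc 0)) (\<lambda>xs. (tl_code ^^ (xs ! 0)) (xs ! 1))"
  proof (rule rec_fn_prim_rec_eq[where F="\<lambda>ys. ys ! 0" and G="\<lambda>ys. tl_code (ys ! 1)"])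
    show "prim_rec (\<lambda>ys. ys ! 0) (\<lambda>ys. tl_code (ys ! 1)) n xs = (tl_code ^^ ((n # xs) ! 0)) ((n # xs) ! 1)"
      for n and xs :: "nat list"
      by (induction n) auto
  qed (auto intro: rec_fn_proj rec_fn_tl_code)
  then show ?thesis by (simp only: numeral_2_eq_2)
qed

lemma rec_fn_tl_code_funpow: "rec_fn k N \<Longrightarrow> rec_fn k A \<Longrightarrow> rec_fn k (\<lambda>xs. (tl_code ^^ N xs) (A xs))"
  using rec_fn_comp2[OF rec_fn_tl_code_funpow2] by simp

definition length_code :: "nat \<Rightarrow> nat" where
  "length_code c = bounded_min (\<lambda>ys. (tl_code ^^ (ys ! 0)) (ys ! 1)) (Suc c) [c]"

lemma length_le_list_encode: "length xs \<le> list_encode xs"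
proof (induction xs)
  case Nil then show ?case by simp
next
  case (Cons a xs)
  then show ?case using le_prod_encode_2[of "list_encode xs" a] by simp
qed

lemma length_code_list_encode[simp]: "length_code (list_encode xs) = length xs"
  unfolding length_code_def
proof (rule bounded_min_eqI)
  show "length xs < Suc (list_encode xs)" using length_le_list_encode[of xs] by simp
  show "(tl_code ^^ ([length xs, list_encode xs] ! 0)) ([length xs, list_encode xs] ! 1) = 0"
    by (simp add: tl_code_funpow)
  show "\<forall>j<length xs. (tl_code ^^ ([j, list_encode xs] ! 0)) ([j, list_encode xs] ! 1) \<noteq> 0"
  proof (intro allI impI)
    fix j assume "j < length xs"
    then obtain y ys where "drop j xs = y # ys" by (metis Cons_nth_drop_Suc)
    then show "(tl_code ^^ ([j, list_encode xs] ! 0)) ([j, list_encode xs] ! 1) \<noteq> 0"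
      by (simp add: tl_code_funpow)
  qed
qed

lemma rec_fn_length_code1: "rec_fn 1 (\<lambda>xs. length_code (xs ! 0))"
proof -
  have "rec_fn 1 (\<lambda>xs. bounded_min (\<lambda>ys. (tl_code ^^ (ys ! 0)) (ys ! 1)) (Suc (xs ! 0)) xs)"
    by (rule rec_fn_bounded_min_subst; (intro rec_fn_tl_code_funpow rec_fn_Suc rec_fn_proj)?; simp)
  then show ?thesis
  proof (rule rec_fn_cong)
    fix xs :: "nat list" assume "length xs = 1"
    then have "xs = [xs ! 0]" by (rule list_length1_eq)
    then show "bounded_min (\<lambda>ys. (tl_code ^^ (ys ! 0)) (ys ! 1)) (Suc (xs ! 0)) xs = length_code (xs ! 0)"
      unfolding length_code_def by metis
  qed
qed

lemma rec_fn_length_code: "rec_fn k A \<Longrightarrow> rec_fn k (\<lambda>xs. length_code (A xs))"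
  using rec_fn_comp1[OF rec_fn_length_code1] by simp

definition nth_code :: "nat \<Rightarrow> nat \<Rightarrow> nat" where "nth_code c i = hd_code ((tl_code ^^ i) c)"

lemma nth_code_list_encode: "i < length xs \<Longrightarrow> nth_code (list_encode xs) i = xs ! i"
  unfolding nth_code_def tl_code_funpow by (metis Cons_nth_drop_Suc hd_code_Cons)

lemma rec_fn_nth_code: "rec_fn k C \<Longrightarrow> rec_fn k I \<Longrightarrow> rec_fn k (\<lambda>xs. nth_code (C xs) (I xs))"
  unfolding nth_code_def by (intro rec_fn_hd_code rec_fn_tl_code_funpow)

fun take_code_aux :: "nat \<Rightarrow> nat \<Rightarrow> nat \<Rightarrow> nat" where
  "take_code_aux c k 0 = 0"
| "take_code_aux c k (Suc j) = Suc (prod_encode (nth_code c (k - Suc j), take_code_aux c k j))"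

lemma rec_fn_take_code_aux: "rec_fn 3 (\<lambda>xs. take_code_aux (xs ! 1) (xs ! 2) (xs ! 0))"
proof -
  let ?G = "\<lambda>ys. Suc (prod_encode (nth_code (ys ! 2) (ys ! 3 - Suc (ys ! 0)), ys ! 1))"
  have "rec_fn (Suc (Suc (Suc 0))) (\<lambda>xs. take_code_aux (xs ! 1) (xs ! 2) (xs ! 0))"
  proof (rule rec_fn_prim_rec_eq[where F="\<lambda>ys. 0" and G="?G"])
    show "prim_rec (\<lambda>ys. 0) ?G n xs = take_code_aux ((n # xs) ! 1) ((n # xs) ! 2) ((n # xs) ! 0)"
      for n and xs :: "nat list"
      by (induction n) auto
  qed (auto intro!: rec_fn_const rec_fn_Suc rec_fn_prod_encode rec_fn_nth_code rec_fn_diff rec_fn_proj)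
  then show ?thesis by (simp only: numeral_3_eq_3)
qed

definition take_code :: "nat \<Rightarrow> nat \<Rightarrow> nat" where
  "take_code c k = take_code_aux c (min k (length_code c)) (min k (length_code c))"

lemma take_code_aux_list_encode:
  "k \<le> length xs \<Longrightarrow> j \<le> k \<Longrightarrow> take_code_aux (list_encode xs) k j = list_encode (drop (k - j) (take k xs))"
proof (induction j)
  case 0 then show ?case by simp
next
  case (Suc j)
  have i: "k - Suc j < length (take k xs)" using Suc.prems by simp
  have "drop (k - Suc j) (take k xs) = (take k xs) ! (k - Suc j) # drop (Suc (k - Suc j)) (take k xs)"
    using i by (rule Cons_nth_drop_Suc[symmetric])
  moreover have "Suc (k - Suc j) = k - j" using Suc.prems by simp
  moreover have "(take k xs) ! (k - Suc j) = xs ! (k - Suc j)" using Suc.prems by simp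
  ultimately show ?case using Suc by (simp add: nth_code_list_encode)
qed

lemma take_code_list_encode[simp]: "take_code (list_encode xs) k = list_encode (take k xs)"
proof -
  have "take_code (list_encode xs) k = list_encode (take (min k (length xs)) xs)"
    unfolding take_code_def by (simp add: take_code_aux_list_encode)
  then show ?thesis by (simp add: min_def)
qed

lemma rec_fn_take_code: "rec_fn k C \<Longrightarrow> rec_fn k K \<Longrightarrow> rec_fn k (\<lambda>xs. take_code (C xs) (K xs))"
proof -
  assume C: "rec_fn k C" and K: "rec_fn k K"
  have m: "rec_fn k (\<lambda>xs. min (K xs) (length_code (C xs)))" unfolding min_def
    by (intro rec_fn_if rec_pred_le K rec_fn_length_code C)
  show ?thesis unfolding take_code_def
    using rec_fn_comp3[OF rec_fn_take_code_aux m C m] by simp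
qed

lemma rec_fn_tl_args: assumes P: "rec_fn k P" shows "rec_fn (Suc k) (\<lambda>ys. P (tl ys))"
proof -
  have "rec_fn (Suc k) (\<lambda>ys. P (map (\<lambda>i. (\<lambda>ys. ys ! Suc i) ys) [0..<k]))"
    by (rule rec_fn_comp[OF P]) (auto intro: rec_fn_proj)
  then show ?thesis
  proof (rule rec_fn_cong)
    fix ys :: "nat list" assume "length ys = Suc k"
    then have "map (\<lambda>i. ys ! Suc i) [0..<k] = tl ys"
      by (intro nth_equalityI) (auto simp: nth_tl)
    then show "P (map (\<lambda>i. (\<lambda>ys. ys ! Suc i) ys) [0..<k]) = P (tl ys)" by simp
  qed
qed

lemma rec_fn_hd: "rec_fn (Suc k) hd"
proof (rule rec_fn_cong[OF rec_fn_proj[of 0 "Suc k"]])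
  show "0 < Suc k" by simp
  fix xs :: "nat list" assume "length xs = Suc k"
  then have "xs \<noteq> []" by auto
  then show "xs ! 0 = hd xs" by (simp add: hd_conv_nth)
qed

primrec const_prog :: "nat \<Rightarrow> recf" where
  "const_prog 0 = Z"
| "const_prog (Suc n) = Cn S [const_prog n]"

lemma eval_const_prog: "eval (const_prog n) xs n"
proof (induction n)
  case 0 then show ?case by (simp add: eval_Z)
next
  case (Suc n)
  show ?case by (simp, rule eval_Cn[where ys="[n]"]) (auto simp: Suc intro: eval_S)
qed

definition section_prog :: "recf \<Rightarrow> nat \<Rightarrow> recf" where
  "section_prog r p = Mn (Cn r [const_prog p, recf.Id 1])"

lemma W_section_prog_1:
  assumes r: "\<forall>xs. length xs = 2 \<longrightarrow> eval r xs (if P (xs ! 0) (xs ! 1) then 0 else 1)"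
    and e: "eval (section_prog r p) [x] y"
  shows "P p x"
proof -
  have r2: "eval r [a, b] (if P a b then 0 else 1)" for a b
    using r[rule_format, of "[a, b]"] by simp
  have "eval (Mn (Cn r [const_prog p, recf.Id 1])) [x] y" using e unfolding section_prog_def by simp
  then have "eval (Cn r [const_prog p, recf.Id 1]) [y, x] 0" by (rule evalMn_E) simp
  then obtain ys where ys: "list_all2 (\<lambda>g z. eval g [y, x] z) [const_prog p, recf.Id 1] ys" "eval r ys 0"
    by (rule evalCn_E) simp
  then obtain a b where ab: "ys = [a, b]" "eval (const_prog p) [y, x] a" "eval (recf.Id 1) [y, x] b"
    by (auto simp: list_all2_Cons1)
  have "a = p" using eval_deterministic[OF ab(2) eval_const_prog] .
  moreover have "b = x" using eval_deterministic[OF ab(3) eval_Id[of 1 "[y, x]"]] by simp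
  ultimately have "eval r [p, x] 0" using ys(2) ab(1) by simp
  moreover have "eval r [p, x] (if P p x then 0 else 1)" by (rule r2)
  ultimately have "(if P p x then 0 else 1) = (0::nat)" using eval_deterministic by metis
  then show "P p x" by (cases "P p x") simp_all
qed

lemma W_section_prog_2:
  assumes r: "\<forall>xs. length xs = 2 \<longrightarrow> eval r xs (if P (xs ! 0) (xs ! 1) then 0 else 1)"
    and P: "P p x"
  shows "eval (section_prog r p) [x] 0"
proof -
  have r2: "eval r [a, b] (if P a b then 0 else 1)" for a b
    using r[rule_format, of "[a, b]"] by simp
  have "eval (Cn r [const_prog p, recf.Id 1]) [0, x] 0"
  proof (rule eval_Cn[where ys="[p, x]"])
    show "list_all2 (\<lambda>g z. eval g [0, x] z) [const_prog p, recf.Id 1] [p, x]"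
      using eval_Id[of 1 "[0, x]"] by (auto simp: eval_const_prog)
    show "eval r [p, x] 0" using r2[of p x] P by simp
  qed
  then show "eval (section_prog r p) [x] 0" unfolding section_prog_def by (intro eval_Mn) simp_all
qed

lemma W_section_prog:
  assumes r: "\<forall>xs. length xs = 2 \<longrightarrow> eval r xs (if P (xs ! 0) (xs ! 1) then 0 else 1)"
  shows "W (code (section_prog r p)) = {x. P p x}"
  unfolding W_code using W_section_prog_1[OF r] W_section_prog_2[OF r] by blast

lemma rec_fn_code_const_prog: "rec_fn 1 (\<lambda>xs. code (const_prog (xs ! 0)))"
proof -
  let ?G = "\<lambda>ys. prod_encode (3, prod_encode (code S, Suc (prod_encode (ys ! 1, 0))))"
  have "rec_fn (Suc 0) (\<lambda>xs. code (const_prog (xs ! 0)))"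
  proof (rule rec_fn_prim_rec_eq[where F="\<lambda>_. code Z" and G="?G"])
    show "prim_rec (\<lambda>_. code Z) ?G n xs = code (const_prog ((n # xs) ! 0))" for n and xs :: "nat list"
      by (induction n) auto
  qed (auto intro!: rec_fn_const rec_fn_prod_encode rec_fn_Suc rec_fn_proj)
  then show ?thesis by simp
qed

lemma rec_fn_code_section_prog: "rec_fn 1 (\<lambda>xs. code (section_prog r (xs ! 0)))"
proof -
  have "rec_fn 1 (\<lambda>xs. prod_encode (5, prod_encode (3, prod_encode (code r,
      Suc (prod_encode (code (const_prog (xs ! 0)), Suc (prod_encode (code (recf.Id 1), 0))))))))"
    by (intro rec_fn_prod_encode rec_fn_const rec_fn_Suc rec_fn_proj
        rec_fn_comp1[OF rec_fn_code_const_prog, where G="\<lambda>xs. xs ! 0", simplified]) simp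
  then show ?thesis unfolding section_prog_def by simp
qed

lemma rec_fn_computable: assumes "computable R" shows "rec_fn 1 (\<lambda>xs. R (xs ! 0))"
proof -
  obtain r where r: "\<And>x. eval r [x] (R x)" using assms unfolding computable_def by blast
  have "eval r xs (R (xs ! 0))" if l: "length xs = 1" for xs
  proof -
    obtain a where "xs = [a]" using l by (cases xs) auto
    then show ?thesis using r[of a] by simp
  qed
  then show ?thesis unfolding rec_fn_def by blast
qed

lemma computable_rec_fn: assumes "rec_fn 1 (\<lambda>xs. g (xs ! 0))" shows "computable g"
proof -
  obtain r where r: "\<And>xs. length xs = 1 \<Longrightarrow> eval r xs (g (xs ! 0))" using assms unfolding rec_fn_def by blast
  have "eval r [x] (g x)" for x using r[of "[x]"] by simp
  then show ?thesis unfolding computable_def by blast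
qed

lemma uniformly_ce_sections:
  assumes "rec_pred 2 (\<lambda>xs. P (xs ! 0) (xs ! 1))"
  shows "\<exists>g. computable g \<and> (\<forall>p. W (g p) = {x. P p x})"
proof -
  obtain r where r: "\<forall>xs. length xs = 2 \<longrightarrow> eval r xs (if P (xs ! 0) (xs ! 1) then 0 else 1)"
    using assms unfolding rec_pred_def rec_fn_def by blast
  have "computable (\<lambda>p. code (section_prog r p))"
    by (rule computable_rec_fn) (rule rec_fn_code_section_prog)
  moreover have "W (code (section_prog r p)) = {x. P p x}" for p
    by (rule W_section_prog[OF r])
  ultimately show ?thesis by blast
qed

lemma ce_UNIV: "ce UNIV"
proof -
  have "W (code Z) = UNIV" unfolding W_code by (auto intro: eval_Z)
  then show ?thesis unfolding ce_def by metis
qed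

section \<open>Spaces of ideals\<close>

lemma topspace_ideal_space: "topspace (ideal_space R) = {I. is_ideal R I}"
  unfolding ideal_space_def basic_open_def is_ideal_def by auto

lemma openin_basic_open: "openin (ideal_space R) (basic_open R k)"
  unfolding ideal_space_def by (rule topology_generated_by_Basis) simp

lemma ideal_lower: "is_ideal R I \<Longrightarrow> k \<in> I \<Longrightarrow> (j, k) \<in> R \<Longrightarrow> j \<in> I"
  unfolding is_ideal_def by blast

lemma ideal_directed: "is_ideal R I \<Longrightarrow> a \<in> I \<Longrightarrow> b \<in> I \<Longrightarrow> \<exists>c\<in>I. (a, c) \<in> R \<and> (b, c) \<in> R"
  unfolding is_ideal_def by blast

lemma ideal_nonempty: "is_ideal R I \<Longrightarrow> I \<noteq> {}"
  unfolding is_ideal_def by blast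

lemma ideal_space_open_nbhd:
  assumes "openin (ideal_space R) U" "I \<in> U"
  shows "\<exists>k\<in>I. basic_open R k \<subseteq> U"
proof -
  have "generate_topology_on (range (basic_open R)) U"
    using assms(1) unfolding ideal_space_def by (rule openin_topology_generated_by)
  moreover have "is_ideal R I"
    using assms openin_subset[of "ideal_space R" U] by (auto simp: topspace_ideal_space)
  ultimately show ?thesis using assms(2)
  proof (induction arbitrary: I)
    case Empty then show ?case by simp
  next
    case (Int a b)
    then obtain k1 k2 where k: "k1 \<in> I" "basic_open R k1 \<subseteq> a" "k2 \<in> I" "basic_open R k2 \<subseteq> b"
      by blast
    then obtain c where c: "c \<in> I" "(k1, c) \<in> R" "(k2, c) \<in> R"
      using ideal_directed[OF Int.prems(1)] by blast
    have "basic_open R c \<subseteq> basic_open R k1 \<inter> basic_open R k2"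
      using c unfolding basic_open_def is_ideal_def by blast
    then show ?case using k c(1) by blast
  next
    case (UN K)
    then show ?case by blast
  next
    case (Basis s)
    then show ?case unfolding basic_open_def by blast
  qed
qed

definition compatible :: "(nat \<times> nat) set \<Rightarrow> nat \<Rightarrow> nat \<Rightarrow> bool" where
  "compatible R a b \<longleftrightarrow> (\<exists>L. is_ideal R L \<and> a \<in> L \<and> b \<in> L)"

lemma not_compatibleI:
  assumes "\<And>c. (a, c) \<in> R \<Longrightarrow> (b, c) \<in> R \<Longrightarrow> False"
  shows "\<not> compatible R a b"
  using assms ideal_directed unfolding compatible_def by metis

lemma compatible_sym: "compatible R a b \<longleftrightarrow> compatible R b a"
  unfolding compatible_def by blast

definition down :: "('a \<times> 'a) set \<Rightarrow> 'a \<Rightarrow> 'a set" where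
  "down R b = {k. (k, b) \<in> R}"

lemma is_ideal_down: "trans R \<Longrightarrow> (b, b) \<in> R \<Longrightarrow> is_ideal R (down R b)"
  unfolding is_ideal_def down_def trans_def by blast

lemma ideal_eq_down:
  assumes "is_ideal R I" "b \<in> I" "\<And>c. (b, c) \<in> R \<Longrightarrow> c = b"
  shows "I = down R b"
  using assms unfolding is_ideal_def down_def by blast

lemma basic_open_eq_down:
  assumes "trans R" "(b, b) \<in> R" "\<And>c. (b, c) \<in> R \<Longrightarrow> c = b"
  shows "basic_open R b = {down R b}"
  using is_ideal_down[OF assms(1,2)] ideal_eq_down[OF _ _ assms(3)] assms(2)
  unfolding basic_open_def down_def by blast

lemma closedin_ideals_subset: "closedin (ideal_space R) {I. is_ideal R I \<and> I \<subseteq> A}"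
proof -
  have "topspace (ideal_space R) - {I. is_ideal R I \<and> I \<subseteq> A} = (\<Union>k\<in>-A. basic_open R k)"
    unfolding topspace_ideal_space basic_open_def by blast
  then show ?thesis
    unfolding closedin_def topspace_ideal_space using openin_basic_open by auto
qed

lemma t1_space_ideal_space_iff:
  "t1_space (ideal_space R) \<longleftrightarrow> (\<forall>I J. is_ideal R I \<longrightarrow> is_ideal R J \<longrightarrow> I \<subseteq> J \<longrightarrow> I = J)"
proof (intro iffI allI impI)
  fix I J assume T1: "t1_space (ideal_space R)" and I: "is_ideal R I" and J: "is_ideal R J" and "I \<subseteq> J"
  show "I = J"
  proof (rule ccontr)
    assume "I \<noteq> J"
    then obtain U where U: "openin (ideal_space R) U" "I \<in> U" "J \<notin> U"
      using T1 I J unfolding t1_space_def topspace_ideal_space by blast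
    then obtain k where "k \<in> I" "basic_open R k \<subseteq> U" using ideal_space_open_nbhd by blast
    then show False using U J \<open>I \<subseteq> J\<close> unfolding basic_open_def by auto
  qed
next
  assume incomparable: "\<forall>I J. is_ideal R I \<longrightarrow> is_ideal R J \<longrightarrow> I \<subseteq> J \<longrightarrow> I = J"
  show "t1_space (ideal_space R)"
    unfolding t1_space_def topspace_ideal_space
  proof (intro ballI impI)
    fix I J assume "I \<in> {I. is_ideal R I}" "J \<in> {I. is_ideal R I}" "I \<noteq> J"
    then obtain k where "k \<in> I" "k \<notin> J" using incomparable by blast
    then show "\<exists>U. openin (ideal_space R) U \<and> I \<in> U \<and> J \<notin> U"
      using \<open>I \<in> {I. is_ideal R I}\<close> openin_basic_open unfolding basic_open_def by blast
  qed
qed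

lemma Hausdorff_space_ideal_space_iff:
  "Hausdorff_space (ideal_space R) \<longleftrightarrow>
    (\<forall>I J. is_ideal R I \<longrightarrow> is_ideal R J \<longrightarrow> I \<noteq> J \<longrightarrow> (\<exists>k\<in>I. \<exists>k'\<in>J. \<not> compatible R k k'))"
proof (intro iffI allI impI)
  fix I J assume H: "Hausdorff_space (ideal_space R)" and I: "is_ideal R I" and J: "is_ideal R J"
    and "I \<noteq> J"
  then obtain U V where UV: "openin (ideal_space R) U" "openin (ideal_space R) V"
    "I \<in> U" "J \<in> V" "disjnt U V"
    unfolding Hausdorff_space_def topspace_ideal_space by blast
  obtain k k' where "k \<in> I" "basic_open R k \<subseteq> U" "k' \<in> J" "basic_open R k' \<subseteq> V"
    using ideal_space_open_nbhd UV by metis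
  then show "\<exists>k\<in>I. \<exists>k'\<in>J. \<not> compatible R k k'"
    using UV(5) unfolding compatible_def basic_open_def disjnt_def by blast
next
  assume sep: "\<forall>I J. is_ideal R I \<longrightarrow> is_ideal R J \<longrightarrow> I \<noteq> J \<longrightarrow> (\<exists>k\<in>I. \<exists>k'\<in>J. \<not> compatible R k k')"
  show "Hausdorff_space (ideal_space R)"
    unfolding Hausdorff_space_def topspace_ideal_space
  proof (intro allI impI, elim conjE)
    fix I J assume "I \<in> {I. is_ideal R I}" "J \<in> {I. is_ideal R I}" "I \<noteq> J"
    then obtain k k' where "k \<in> I" "k' \<in> J" "\<not> compatible R k k'"
      using sep by blast
    then have "I \<in> basic_open R k" "J \<in> basic_open R k'" "disjnt (basic_open R k) (basic_open R k')"
      using \<open>I \<in> {I. is_ideal R I}\<close> \<open>J \<in> {I. is_ideal R I}\<close>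
      unfolding compatible_def basic_open_def disjnt_def by auto
    then show "\<exists>U V. openin (ideal_space R) U \<and> openin (ideal_space R) V \<and> I \<in> U \<and> J \<in> V \<and> disjnt U V"
      using openin_basic_open by blast
  qed
qed

lemma ideal_space_eq_discrete_topology:
  assumes "\<And>I. is_ideal R I \<Longrightarrow> \<exists>k. basic_open R k = {I}"
  shows "ideal_space R = discrete_topology {I. is_ideal R I}"
  using assms openin_basic_open
  by (metis discrete_topology_unique mem_Collect_eq topspace_ideal_space)

section \<open>Trees of finite sequences and their branches\<close>

lemma prefix_iff_take: "prefix s t \<longleftrightarrow> take (length s) t = s"
  unfolding prefix_def by (metis append_eq_conv_conj append_take_drop_id)

lemma prefix_nth: "prefix s t \<Longrightarrow> i < length s \<Longrightarrow> s ! i = t ! i"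
  unfolding prefix_def by (auto simp: nth_append)

lemma prefix_same_length: "prefix a u \<Longrightarrow> prefix b u \<Longrightarrow> length a = length b \<Longrightarrow> a = b"
  unfolding prefix_iff_take by metis

lemma prefix_map_upt: "a \<le> b \<Longrightarrow> prefix (map f [0..<a]) (map f [0..<b])"
  unfolding prefix_iff_take by (simp add: take_map min_def)

lemma strict_prefix_map_upt: "a < b \<Longrightarrow> strict_prefix (map f [0..<a]) (map f [0..<b])"
  using prefix_map_upt[of a b f] by (auto simp: strict_prefix_def dest: arg_cong[where f=length])

lemma map_upt_inj: "map f [0..<a] = map g [0..<b] \<Longrightarrow> a = b"
  by (drule arg_cong[where f=length]) simp

definition in_tree :: "(nat \<Rightarrow> nat) \<Rightarrow> nat \<Rightarrow> nat list \<Rightarrow> bool" where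
  "in_tree R p t \<longleftrightarrow> (\<forall>i\<le>length t. R (prod_encode (p, list_encode (take i t))) \<noteq> 0)"

definition branch :: "(nat \<Rightarrow> nat) \<Rightarrow> nat \<Rightarrow> (nat \<Rightarrow> nat) \<Rightarrow> bool" where
  "branch R p f \<longleftrightarrow> (\<forall>k. R (prod_encode (p, list_encode (map f [0..<k]))) \<noteq> 0)"

lemma take_map_upt: "i \<le> k \<Longrightarrow> take i (map f [0..<k]) = map f [0..<i]"
  by (simp add: take_map)

lemma prefix_map_upt_eq:
  assumes "prefix s (map f [0..<n])"
  shows "s = map f [0..<length s]"
proof -
  have "length s \<le> n" using prefix_length_le[OF assms] by simp
  then show ?thesis using assms take_map_upt[of "length s" n f] unfolding prefix_iff_take by simp
qed

lemma in_tree_prefix: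
  assumes "in_tree R p t" "prefix s t"
  shows "in_tree R p s"
  unfolding in_tree_def
proof (intro allI impI)
  fix i assume "i \<le> length s"
  have "take i s = take i (take (length s) t)" using assms(2) unfolding prefix_iff_take by simp
  also have "\<dots> = take i t" using \<open>i \<le> length s\<close> by (simp add: min_def)
  finally show "R (prod_encode (p, list_encode (take i s))) \<noteq> 0"
    using assms \<open>i \<le> length s\<close> prefix_length_le[OF assms(2)] unfolding in_tree_def by simp
qed

lemma branch_iff_in_tree: "branch R p f \<longleftrightarrow> (\<forall>k. in_tree R p (map f [0..<k]))"
proof
  assume "branch R p f"
  then show "\<forall>k. in_tree R p (map f [0..<k])"
    unfolding branch_def in_tree_def by (simp add: take_map_upt)
next
  assume "\<forall>k. in_tree R p (map f [0..<k])"
  then have "\<forall>i\<le>k. R (prod_encode (p, list_encode (take i (map f [0..<k])))) \<noteq> 0" for k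
    unfolding in_tree_def by simp
  then have "R (prod_encode (p, list_encode (take k (map f [0..<k])))) \<noteq> 0" for k
    by blast
  then show "branch R p f" unfolding branch_def by simp
qed

lemma pi11_imp_branch_free_trees:
  assumes "pi11 A"
  obtains R where "computable R" "\<And>p. p \<in> A \<longleftrightarrow> \<not> (\<exists>f. branch R p f)"
proof -
  obtain R where "computable R"
    and "\<forall>p. p \<in> A \<longleftrightarrow> (\<forall>f::nat \<Rightarrow> nat. \<exists>m. R (prod_encode (p, list_encode (map f [0..<m]))) = 0)"
    using assms unfolding pi11_def by blast
  moreover have "(\<forall>f::nat \<Rightarrow> nat. \<exists>m. R (prod_encode (p, list_encode (map f [0..<m]))) = 0)
      \<longleftrightarrow> \<not> (\<exists>f. branch R p f)" for p
    unfolding branch_def by simp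
  ultimately show ?thesis using that by simp
qed

lemma prefix_chain_eq_initial_segments:
  assumes chain: "\<And>s t. s \<in> C \<Longrightarrow> t \<in> C \<Longrightarrow> prefix s t \<or> prefix t s"
    and closed: "\<And>s t. t \<in> C \<Longrightarrow> prefix s t \<Longrightarrow> s \<in> C"
    and unbounded: "\<And>n. \<exists>s\<in>C. n \<le> length s"
  shows "\<exists>f. C = range (\<lambda>n. map f [0..<n])"
proof -
  have "\<exists>s. s \<in> C \<and> i < length s" for i
    using unbounded[of "Suc i"] by (auto simp: Suc_le_eq)
  then obtain long where long: "\<And>i. long i \<in> C" "\<And>i. i < length (long i)" by metis
  define f where "f i = long i ! i" for i
  have initial: "map f [0..<length s] = s" if "s \<in> C" for s
  proof (rule nth_equalityI)
    fix i assume "i < length (map f [0..<length s])"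
    then have i: "i < length s" by simp
    from chain[OF long(1) that] have "long i ! i = s ! i"
    proof
      assume "prefix (long i) s" then show ?thesis using prefix_nth long(2) by blast
    next
      assume "prefix s (long i)" then show ?thesis using prefix_nth[OF _ i] by simp
    qed
    then show "map f [0..<length s] ! i = s ! i" using i by (simp add: f_def)
  qed simp
  have "map f [0..<n] \<in> C" for n
  proof -
    obtain s where s: "s \<in> C" "n \<le> length s" using unbounded by blast
    then have "prefix (map f [0..<n]) s" using prefix_map_upt[of n "length s" f] initial by simp
    then show ?thesis using closed s(1) by blast
  qed
  moreover have "s \<in> range (\<lambda>n. map f [0..<n])" if "s \<in> C" for s
    using initial[OF that] by (metis rangeI)
  ultimately have "C = range (\<lambda>n. map f [0..<n])" by blast
  then show ?thesis by blast
qed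

definition branch_ideal :: "(nat list \<Rightarrow> nat) \<Rightarrow> (nat \<Rightarrow> nat) \<Rightarrow> nat set" where
  "branch_ideal e f = range (\<lambda>k. e (map f [0..<k]))"

lemma branch_ideal_mem: "e (map f [0..<n]) \<in> branch_ideal e f"
  unfolding branch_ideal_def by blast

lemma branch_ideal_Nil: "e [] \<in> branch_ideal e f"
  using branch_ideal_mem[of e f 0] by simp

lemma branch_ideal_eq_if_subset:
  assumes "branch_ideal e f \<subseteq> branch_ideal e' f'" and inj: "\<And>s t. e s = e' t \<Longrightarrow> s = t"
  shows "branch_ideal e f = branch_ideal e' f'"
proof -
  have "e (map f [0..<k]) = e' (map f' [0..<k])" for k
  proof -
    obtain k' where k': "e (map f [0..<k]) = e' (map f' [0..<k'])"
      using assms(1) unfolding branch_ideal_def by blast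
    then have "map f [0..<k] = map f' [0..<k']" by (rule inj)
    then have "k = k'" by (rule map_upt_inj)
    then show ?thesis using k' by simp
  qed
  then show ?thesis unfolding branch_ideal_def by simp
qed

lemma branch_ideal_neq_imp_map_upt_neq:
  assumes "branch_ideal e f \<noteq> branch_ideal e f'"
  shows "\<exists>n. map f [0..<n] \<noteq> map f' [0..<n]"
proof (rule ccontr)
  assume "\<not> ?thesis"
  then have "\<And>n. map f [0..<n] = map f' [0..<n]" by blast
  then have "(\<lambda>k. e (map f [0..<k])) = (\<lambda>k. e (map f' [0..<k]))" by (simp only:)
  then have "branch_ideal e f = branch_ideal e f'" unfolding branch_ideal_def by (rule arg_cong)
  then show False using assms by contradiction
qed

definition tree_embedding ::
    "(nat \<times> nat) set \<Rightarrow> nat set \<Rightarrow> (nat list \<Rightarrow> nat) \<Rightarrow> (nat list \<Rightarrow> bool) \<Rightarrow> bool" where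
  "tree_embedding R T e G \<longleftrightarrow>
     (\<forall>s t. (e s, e t) \<in> R \<longleftrightarrow> strict_prefix s t \<and> G t)
   \<and> (\<forall>j t. (j, e t) \<in> R \<longrightarrow> j \<in> range e)
   \<and> (\<forall>s c. (e s, c) \<in> R \<longrightarrow> c \<notin> T \<longrightarrow> c \<in> range e)"

lemma is_ideal_branch_ideal:
  assumes emb: "tree_embedding R T e G" and G: "\<And>k. G (map f [0..<k])"
  shows "is_ideal R (branch_ideal e f)"
  unfolding is_ideal_def
proof (intro conjI ballI allI impI)
  show "branch_ideal e f \<noteq> {}" unfolding branch_ideal_def by simp
next
  fix k j assume "k \<in> branch_ideal e f" and j: "(j, k) \<in> R"
  then obtain n where n: "k = e (map f [0..<n])" unfolding branch_ideal_def by blast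
  with j emb obtain s where s: "j = e s" unfolding tree_embedding_def by blast
  with j n emb have "prefix s (map f [0..<n])"
    unfolding tree_embedding_def strict_prefix_def by blast
  then have "s = map f [0..<length s]" by (rule prefix_map_upt_eq)
  then show "j \<in> branch_ideal e f" using s branch_ideal_mem by metis
next
  fix a b assume "a \<in> branch_ideal e f" "b \<in> branch_ideal e f"
  then obtain n1 n2 where n: "a = e (map f [0..<n1])" "b = e (map f [0..<n2])"
    unfolding branch_ideal_def by blast
  let ?N = "Suc (max n1 n2)"
  have "(a, e (map f [0..<?N])) \<in> R" "(b, e (map f [0..<?N])) \<in> R"
    using emb G[of ?N] strict_prefix_map_upt[of n1 ?N f] strict_prefix_map_upt[of n2 ?N f]
    unfolding n tree_embedding_def by (simp_all del: upt_Suc)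
  then show "\<exists>c\<in>branch_ideal e f. (a, c) \<in> R \<and> (b, c) \<in> R" using branch_ideal_mem by blast
qed

lemma ideal_subset_range_embedding:
  assumes emb: "tree_embedding R T e G" and I: "is_ideal R I" and no_top: "I \<inter> T = {}"
    and meets: "e s0 \<in> I"
  shows "I \<subseteq> range e"
proof
  fix k assume "k \<in> I"
  then obtain c where c: "c \<in> I" "(e s0, c) \<in> R" "(k, c) \<in> R"
    using ideal_directed[OF I meets] by blast
  then have "c \<in> range e" using emb no_top unfolding tree_embedding_def by blast
  then show "k \<in> range e" using emb c(3) unfolding tree_embedding_def by blast
qed

lemma ideal_eq_branch_ideal:
  assumes emb: "tree_embedding R T e G" and G_prefix: "\<And>s t. G t \<Longrightarrow> prefix s t \<Longrightarrow> G s"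
    and I: "is_ideal R I" and no_top: "I \<inter> T = {}" and meets: "e s0 \<in> I"
  shows "\<exists>f. (\<forall>k. G (map f [0..<k])) \<and> I = branch_ideal e f"
proof -
  have edge: "(e s, e t) \<in> R \<longleftrightarrow> strict_prefix s t \<and> G t" for s t
    using emb unfolding tree_embedding_def by blast
  have sub: "I \<subseteq> range e" by (rule ideal_subset_range_embedding[OF emb I no_top meets])
  define seqs where "seqs = {s. e s \<in> I}"
  have up: "\<exists>t\<in>seqs. strict_prefix s t \<and> G t" if s: "s \<in> seqs" for s
  proof -
    obtain c where "c \<in> I" "(e s, c) \<in> R" using ideal_directed[OF I, of "e s" "e s"] s seqs_def by auto
    moreover obtain t where "c = e t" using sub \<open>c \<in> I\<close> by blast
    ultimately show ?thesis using edge unfolding seqs_def by auto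
  qed
  have G_seqs: "G s" if "s \<in> seqs" for s
    using up[OF that] G_prefix prefix_order.less_imp_le by blast
  have "\<exists>f. seqs = range (\<lambda>n. map f [0..<n])"
  proof (rule prefix_chain_eq_initial_segments)
    fix s t assume "s \<in> seqs" "t \<in> seqs"
    then obtain c where c: "c \<in> I" "(e s, c) \<in> R" "(e t, c) \<in> R"
      using ideal_directed[OF I] unfolding seqs_def by blast
    moreover obtain u where "c = e u" using sub c(1) by blast
    ultimately have "prefix s u" "prefix t u" by (simp_all add: edge strict_prefix_def)
    then show "prefix s t \<or> prefix t s" by (rule prefix_same_cases)
  next
    fix s t assume t: "t \<in> seqs" and st: "prefix s t"
    show "s \<in> seqs"
    proof (cases "s = t")
      case False
      then have "(e s, e t) \<in> R" using edge st G_seqs[OF t] by (simp add: strict_prefix_def)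
      then show ?thesis using ideal_lower[OF I] t unfolding seqs_def by blast
    qed (use t in simp)
  next
    fix n show "\<exists>s\<in>seqs. n \<le> length s"
    proof (induction n)
      case 0 then show ?case using meets seqs_def by blast
    next
      case (Suc n)
      then obtain s where "s \<in> seqs" "n \<le> length s" by blast
      moreover obtain t where "t \<in> seqs" "strict_prefix s t" using up[OF \<open>s \<in> seqs\<close>] by blast
      ultimately show ?case using prefix_length_less[of s t] by (intro bexI[of _ t]) simp_all
    qed
  qed
  then obtain f where f: "seqs = range (\<lambda>n. map f [0..<n])" by blast
  have "I = e ` seqs" using sub unfolding seqs_def by blast
  then have "I = branch_ideal e f" unfolding f branch_ideal_def by (simp add: image_image)
  moreover have "G (map f [0..<k])" for k using G_seqs f by blast
  ultimately show ?thesis by blast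
qed

section \<open>The construction\<close>

abbreviation reg_node :: "nat list \<Rightarrow> nat" where
  "reg_node s \<equiv> prod_encode (0, list_encode s)"
abbreviation reg_copy :: "nat \<Rightarrow> nat list \<Rightarrow> nat" where
  "reg_copy m s \<equiv> prod_encode (2, prod_encode (m, list_encode s))"
abbreviation reg_top :: "nat \<Rightarrow> nat list \<Rightarrow> nat" where
  "reg_top m t \<equiv> prod_encode (3, prod_encode (m, list_encode t))"
abbreviation haus_node1 :: "nat list \<Rightarrow> nat" where
  "haus_node1 s \<equiv> prod_encode (4, list_encode s)"
abbreviation haus_node2 :: "nat list \<Rightarrow> nat" where
  "haus_node2 s \<equiv> prod_encode (5, list_encode s)"
abbreviation haus_top :: "nat list \<Rightarrow> nat" where
  "haus_top t \<equiv> prod_encode (6, list_encode t)"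
abbreviation t1_node :: "nat list \<Rightarrow> nat" where
  "t1_node s \<equiv> prod_encode (7, list_encode s)"
abbreviation t1_top :: "nat \<Rightarrow> nat" where
  "t1_top d \<equiv> prod_encode (8, d)"

text \<open>The codes with tag 1 or at least 9 are isolated points. They make every basic open set
  nonempty, so that the overtness condition \<open>iota_ce\<close> holds trivially.\<close>

inductive_set space_rel :: "(nat \<Rightarrow> nat) \<Rightarrow> (nat \<Rightarrow> nat) \<Rightarrow> (nat \<Rightarrow> nat) \<Rightarrow> nat \<Rightarrow> (nat \<times> nat) set"
  for R1 R2 R3 :: "nat \<Rightarrow> nat" and p :: nat where
  reg_node_step: "strict_prefix s t \<Longrightarrow> in_tree R1 p t \<Longrightarrow> (reg_node s, reg_node t) \<in> space_rel R1 R2 R3 p"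
| reg_copy_step: "strict_prefix s t \<Longrightarrow> in_tree R1 p t \<Longrightarrow> (reg_copy m s, reg_copy m t) \<in> space_rel R1 R2 R3 p"
| reg_copy_top: "prefix s t \<Longrightarrow> (reg_copy m s, reg_top m t) \<in> space_rel R1 R2 R3 p"
| reg_node_top: "prefix s (take m t) \<Longrightarrow> (reg_node s, reg_top m t) \<in> space_rel R1 R2 R3 p"
| reg_top_refl: "(reg_top m t, reg_top m t) \<in> space_rel R1 R2 R3 p"
| haus_node1_step: "strict_prefix s t \<Longrightarrow> in_tree R2 p t \<Longrightarrow> (haus_node1 s, haus_node1 t) \<in> space_rel R1 R2 R3 p"
| haus_node2_step: "strict_prefix s t \<Longrightarrow> in_tree R2 p t \<Longrightarrow> (haus_node2 s, haus_node2 t) \<in> space_rel R1 R2 R3 p"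
| haus_node1_top: "prefix s t \<Longrightarrow> (haus_node1 s, haus_top t) \<in> space_rel R1 R2 R3 p"
| haus_node2_top: "prefix s t \<Longrightarrow> (haus_node2 s, haus_top t) \<in> space_rel R1 R2 R3 p"
| haus_top_refl: "(haus_top t, haus_top t) \<in> space_rel R1 R2 R3 p"
| t1_node_step: "strict_prefix s t \<Longrightarrow> in_tree R3 p t \<Longrightarrow> (t1_node s, t1_node t) \<in> space_rel R1 R2 R3 p"
| t1_node_top: "(t1_node s, t1_top d) \<in> space_rel R1 R2 R3 p"
| t1_top_refl: "(t1_top d, t1_top d) \<in> space_rel R1 R2 R3 p"
| isolated_refl: "t = 1 \<or> 9 \<le> t \<Longrightarrow> (prod_encode (t, d), prod_encode (t, d)) \<in> space_rel R1 R2 R3 p"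

declare list_encode_eq [simp]

definition is_top :: "nat \<Rightarrow> bool" where
  "is_top b \<longleftrightarrow> fst (prod_decode b) \<in> {1, 3, 6, 8} \<or> 9 \<le> fst (prod_decode b)"

lemma is_top_prod_encode [simp]: "is_top (prod_encode (t, d)) \<longleftrightarrow> t \<in> {1, 3, 6, 8} \<or> 9 \<le> t"
  unfolding is_top_def by simp

definition embeddings :: "(nat list \<Rightarrow> nat) set" where
  "embeddings = {reg_node, haus_node1, haus_node2, t1_node} \<union> range reg_copy"

lemma embeddings_inj: "e \<in> embeddings \<Longrightarrow> e' \<in> embeddings \<Longrightarrow> e s = e' t \<Longrightarrow> s = t"
  unfolding embeddings_def by auto

lemma non_t1_embeddings:
  "reg_node \<in> embeddings - {t1_node}" "reg_copy m \<in> embeddings - {t1_node}"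
  "haus_node1 \<in> embeddings - {t1_node}" "haus_node2 \<in> embeddings - {t1_node}"
  by (auto simp: embeddings_def fun_eq_iff)

lemma nat_prod_encode_cases: obtains t d where "n = prod_encode (t, d)"
  by (metis prod_decode_inverse surj_pair)

lemma nat_list_encode_cases: obtains s where "n = list_encode s"
  by (metis list_decode_inverse)

lemma not_top_cases:
  assumes "\<not> is_top k"
  obtains s where "k = reg_node s" | m s where "k = reg_copy m s" | s where "k = haus_node1 s"
    | s where "k = haus_node2 s" | s where "k = t1_node s"
proof -
  obtain t d where k: "k = prod_encode (t, d)" by (rule nat_prod_encode_cases)
  obtain s where s: "d = list_encode s" by (rule nat_list_encode_cases)
  obtain m d' where m: "d = prod_encode (m, d')" by (rule nat_prod_encode_cases)
  obtain s' where s': "d' = list_encode s'" by (rule nat_list_encode_cases)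
  consider "t = 0" | "t = 2" | "t = 4" | "t = 5" | "t = 7" using assms k by fastforce
  then show ?thesis
  proof cases
    case 2 then show ?thesis using that(2) k m s' by simp
  qed (use that k s in simp_all)
qed

lemma encode_lower_bounds:
  "length t \<le> prod_encode (k, list_encode t)"
  "length t \<le> prod_encode (k, prod_encode (m, list_encode t))"
  "m \<le> prod_encode (k, prod_encode (m, d))"
  using le_prod_encode_1 le_prod_encode_2 length_le_list_encode by (blast intro: le_trans)+

context
  fixes R1 R2 R3 :: "nat \<Rightarrow> nat" and p :: nat
begin

abbreviation rel :: "(nat \<times> nat) set" where
  "rel \<equiv> space_rel R1 R2 R3 p"

lemma trans_space_rel: "trans rel"
proof (rule transI)
  fix x y z assume "(x, y) \<in> rel" and yz: "(y, z) \<in> rel"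
  then show "(x, z) \<in> rel"
  proof cases
    case (reg_copy_step s t m)
    from yz show ?thesis
      by cases (use reg_copy_step in \<open>auto intro: space_rel.intros prefix_order.less_trans
        prefix_order.trans prefix_order.less_imp_le\<close>)
  qed (use yz in \<open>auto elim!: space_rel.cases intro: space_rel.intros
      prefix_order.less_trans prefix_order.trans prefix_order.less_imp_le prefix_order.less_le_trans\<close>)
qed

lemma top_maximal: "is_top b \<Longrightarrow> (b, c) \<in> rel \<Longrightarrow> c = b"
  by (erule space_rel.cases) auto

lemma top_refl:
  assumes "is_top b"
  shows "(b, b) \<in> rel"
proof -
  obtain t d where b: "b = prod_encode (t, d)" by (rule nat_prod_encode_cases)
  consider "t = 3" | "t = 6" | "t = 8" | "t = 1 \<or> 9 \<le> t" using assms b by fastforce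
  then show ?thesis
  proof cases
    case 1
    obtain m d' where "d = prod_encode (m, d')" by (rule nat_prod_encode_cases)
    moreover obtain s where "d' = list_encode s" by (rule nat_list_encode_cases)
    ultimately show ?thesis using 1 b space_rel.reg_top_refl by simp
  next
    case 2
    obtain s where "d = list_encode s" by (rule nat_list_encode_cases)
    then show ?thesis using 2 b space_rel.haus_top_refl by simp
  next
    case 3 then show ?thesis using b space_rel.t1_top_refl by simp
  next
    case 4 then show ?thesis using b space_rel.isolated_refl by simp
  qed
qed

lemma is_ideal_down_top: "is_top b \<Longrightarrow> is_ideal rel (down rel b)"
  by (rule is_ideal_down[OF trans_space_rel top_refl])

lemma ideal_eq_down_top: "is_ideal rel I \<Longrightarrow> b \<in> I \<Longrightarrow> is_top b \<Longrightarrow> I = down rel b"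
  using ideal_eq_down top_maximal by blast

lemma top_in_down: "is_top b \<Longrightarrow> b \<in> down rel b"
  unfolding down_def by (simp add: top_refl)

lemma basic_open_top: "is_top b \<Longrightarrow> basic_open rel b = {down rel b}"
  by (rule basic_open_eq_down[OF trans_space_rel top_refl top_maximal])

lemma below_some_top: "\<exists>b. is_top b \<and> (k, b) \<in> rel"
proof (cases "is_top k")
  case False
  then show ?thesis
  proof (cases rule: not_top_cases)
    case (1 s) then show ?thesis using space_rel.reg_node_top[of s "length s" s] by force
  next
    case (2 m s) then show ?thesis using space_rel.reg_copy_top[of s s] by force
  next
    case (3 s) then show ?thesis using space_rel.haus_node1_top[of s s] by force
  next
    case (4 s) then show ?thesis using space_rel.haus_node2_top[of s s] by force
  next
    case (5 s) then show ?thesis using space_rel.t1_node_top[where s=s and d=0] by force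
  qed
qed (use top_refl in blast)

lemma basic_open_nonempty: "basic_open rel k \<noteq> {}"
proof -
  obtain b where "is_top b" "(k, b) \<in> rel" using below_some_top by blast
  then have "down rel b \<in> basic_open rel k"
    using is_ideal_down_top unfolding basic_open_def down_def by simp
  then show ?thesis by blast
qed

lemma tree_embeddings:
  "tree_embedding rel (Collect is_top) reg_node (in_tree R1 p)"
  "tree_embedding rel (Collect is_top) (reg_copy m) (in_tree R1 p)"
  "tree_embedding rel (Collect is_top) haus_node1 (in_tree R2 p)"
  "tree_embedding rel (Collect is_top) haus_node2 (in_tree R2 p)"
  "tree_embedding rel (Collect is_top) t1_node (in_tree R3 p)"
  unfolding tree_embedding_def by (auto elim: space_rel.cases intro: space_rel.intros)

lemma is_ideal_branch_ideal_rel: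
  "tree_embedding rel (Collect is_top) e (in_tree R p) \<Longrightarrow> branch R p f \<Longrightarrow>
    is_ideal rel (branch_ideal e f)"
  by (erule is_ideal_branch_ideal) (simp add: branch_iff_in_tree)

lemma ideal_cases:
  assumes I: "is_ideal rel I"
  obtains (top) b where "is_top b" "I = down rel b"
  | (reg_node) f where "branch R1 p f" "I = branch_ideal reg_node f"
  | (reg_copy) m f where "branch R1 p f" "I = branch_ideal (reg_copy m) f"
  | (haus_node1) f where "branch R2 p f" "I = branch_ideal haus_node1 f"
  | (haus_node2) f where "branch R2 p f" "I = branch_ideal haus_node2 f"
  | (t1_node) f where "branch R3 p f" "I = branch_ideal t1_node f"
proof (cases "\<exists>b\<in>I. is_top b")
  case True
  then show ?thesis using ideal_eq_down_top[OF I] that(1) by blast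
next
  case False
  have branch_of: "\<exists>f. branch R p f \<and> I = branch_ideal e f"
    if "tree_embedding rel (Collect is_top) e (in_tree R p)" "e s \<in> I" for e R s
  proof -
    have "\<exists>f. (\<forall>k. in_tree R p (map f [0..<k])) \<and> I = branch_ideal e f"
      by (rule ideal_eq_branch_ideal[OF that(1) _ I _ that(2)]) (use False in_tree_prefix in blast)+
    then show ?thesis by (simp add: branch_iff_in_tree)
  qed
  obtain k where "k \<in> I" using ideal_nonempty[OF I] by blast
  with False have "\<not> is_top k" by blast
  then show ?thesis
  proof (cases rule: not_top_cases)
    case (1 s) then show ?thesis using branch_of[OF tree_embeddings(1)] \<open>k \<in> I\<close> that(2) by blast
  next
    case (2 m s) then show ?thesis using branch_of[OF tree_embeddings(2)] \<open>k \<in> I\<close> that(3) by blast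
  next
    case (3 s) then show ?thesis using branch_of[OF tree_embeddings(3)] \<open>k \<in> I\<close> that(4) by blast
  next
    case (4 s) then show ?thesis using branch_of[OF tree_embeddings(4)] \<open>k \<in> I\<close> that(5) by blast
  next
    case (5 s) then show ?thesis using branch_of[OF tree_embeddings(5)] \<open>k \<in> I\<close> that(6) by blast
  qed
qed

lemma ideal_down_or_branch_ideal:
  assumes "is_ideal rel I"
  shows "(\<exists>b. is_top b \<and> I = down rel b) \<or> (\<exists>e\<in>embeddings. \<exists>f. I = branch_ideal e f)"
  using assms by (cases rule: ideal_cases) (auto simp: embeddings_def)

lemma length_below_le:
  assumes "e \<in> embeddings - {t1_node}" "(e s, b) \<in> rel"
  shows "length s \<le> b"
  using assms unfolding embeddings_def
  by (auto elim!: space_rel.cases dest!: prefix_length_le prefix_order.less_imp_le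
      intro: order.trans[OF _ encode_lower_bounds(1)] order.trans[OF _ encode_lower_bounds(2)]
        order.trans[OF _ encode_lower_bounds(3)])

lemma branch_ideal_not_subset_down:
  assumes "e \<in> embeddings - {t1_node}"
  shows "\<not> branch_ideal e f \<subseteq> down rel b"
proof
  assume "branch_ideal e f \<subseteq> down rel b"
  then have "e (map f [0..<Suc b]) \<in> down rel b" using branch_ideal_mem by (rule subsetD)
  then have "(e (map f [0..<Suc b]), b) \<in> rel" unfolding down_def by simp
  then have "length (map f [0..<Suc b]) \<le> b" by (rule length_below_le[OF assms])
  then show False by simp
qed

lemma branch_ideal_maximal:
  assumes e: "e \<in> embeddings - {t1_node}" and J: "is_ideal rel J" and sub: "branch_ideal e f \<subseteq> J"
  shows "branch_ideal e f = J"
  using ideal_down_or_branch_ideal[OF J]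
proof (elim disjE exE conjE bexE)
  fix b assume "J = down rel b"
  then show ?thesis using branch_ideal_not_subset_down[OF e] sub by simp
next
  fix e' f' assume e': "e' \<in> embeddings" and J_eq: "J = branch_ideal e' f'"
  have "\<And>s t. e s = e' t \<Longrightarrow> s = t" using embeddings_inj e e' by blast
  with sub show ?thesis unfolding J_eq by (rule branch_ideal_eq_if_subset)
qed

lemma t1_space_space_rel:
  assumes "\<not> (\<exists>f. branch R3 p f)"
  shows "t1_space (ideal_space rel)"
  unfolding t1_space_ideal_space_iff
proof (intro allI impI)
  fix I J assume I: "is_ideal rel I" and J: "is_ideal rel J" and "I \<subseteq> J"
  from I show "I = J"
  proof (cases rule: ideal_cases)
    case (top b)
    then show ?thesis using ideal_eq_down_top[OF J] top_in_down \<open>I \<subseteq> J\<close> by blast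
  next
    case (reg_node f)
    then show ?thesis using branch_ideal_maximal[OF non_t1_embeddings(1) J] \<open>I \<subseteq> J\<close> by simp
  next
    case (reg_copy m f)
    then show ?thesis using branch_ideal_maximal[OF non_t1_embeddings(2) J] \<open>I \<subseteq> J\<close> by simp
  next
    case (haus_node1 f)
    then show ?thesis using branch_ideal_maximal[OF non_t1_embeddings(3) J] \<open>I \<subseteq> J\<close> by simp
  next
    case (haus_node2 f)
    then show ?thesis using branch_ideal_maximal[OF non_t1_embeddings(4) J] \<open>I \<subseteq> J\<close> by simp
  next
    case (t1_node f) then show ?thesis using assms by blast
  qed
qed

lemma not_t1_space_space_rel:
  assumes "branch R3 p f"
  shows "\<not> t1_space (ideal_space rel)"
proof -
  have "is_ideal rel (branch_ideal t1_node f)"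
    by (rule is_ideal_branch_ideal_rel[OF tree_embeddings(5) assms])
  moreover have "is_ideal rel (down rel (t1_top 0))" by (rule is_ideal_down_top) simp
  moreover have "branch_ideal t1_node f \<subseteq> down rel (t1_top 0)"
    unfolding branch_ideal_def down_def by (auto intro: space_rel.t1_node_top)
  moreover have "t1_top 0 \<in> down rel (t1_top 0)" "t1_top 0 \<notin> branch_ideal t1_node f"
    by (simp_all add: top_in_down branch_ideal_def image_iff)
  ultimately show ?thesis unfolding t1_space_ideal_space_iff by blast
qed

lemma reg_node_upper_bound:
  "(reg_node a, c) \<in> rel \<Longrightarrow>
    (\<exists>t. c = reg_node t \<and> prefix a t) \<or> (\<exists>m t. c = reg_top m t \<and> prefix a (take m t))"
  by (erule space_rel.cases) (auto simp: strict_prefix_def)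

lemma reg_copy_upper_bound:
  "(reg_copy m a, c) \<in> rel \<Longrightarrow> \<exists>t. (c = reg_copy m t \<or> c = reg_top m t) \<and> prefix a t"
  by (erule space_rel.cases) (auto simp: strict_prefix_def)

lemma reg_nodes_incompatible:
  "length a = length a' \<Longrightarrow> a \<noteq> a' \<Longrightarrow> \<not> compatible rel (reg_node a) (reg_node a')"
  by (rule not_compatibleI) (auto dest!: reg_node_upper_bound dest: prefix_same_length)

lemma reg_copies_incompatible:
  "m \<noteq> m' \<or> (length a = length a' \<and> a \<noteq> a') \<Longrightarrow> \<not> compatible rel (reg_copy m a) (reg_copy m' a')"
  by (rule not_compatibleI) (auto dest!: reg_copy_upper_bound dest: prefix_same_length)

lemma reg_node_copy_incompatible: "m < length a \<Longrightarrow> \<not> compatible rel (reg_node a) (reg_copy m a')"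
  by (rule not_compatibleI) (auto dest!: reg_node_upper_bound reg_copy_upper_bound prefix_length_le)

lemma reg_branch_ideals_separated:
  assumes I: "(\<exists>f. I = branch_ideal reg_node f) \<or> (\<exists>m f. I = branch_ideal (reg_copy m) f)"
    and J: "(\<exists>f. J = branch_ideal reg_node f) \<or> (\<exists>m f. J = branch_ideal (reg_copy m) f)"
    and "I \<noteq> J"
  shows "\<exists>k\<in>I. \<exists>k'\<in>J. \<not> compatible rel k k'"
proof -
  have node_copy: "\<exists>k\<in>branch_ideal reg_node f. \<exists>k'\<in>branch_ideal (reg_copy m) f'. \<not> compatible rel k k'"
    for f m f'
  proof -
    have "\<not> compatible rel (reg_node (map f [0..<Suc m])) (reg_copy m [])"
      by (rule reg_node_copy_incompatible) simp
    then show ?thesis by (rule bexI[OF bexI[OF _ branch_ideal_Nil] branch_ideal_mem])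
  qed
  from I J show ?thesis
  proof (elim disjE exE)
    fix f f' assume I: "I = branch_ideal reg_node f" and J: "J = branch_ideal reg_node f'"
    then obtain n where "map f [0..<n] \<noteq> map f' [0..<n]"
      using branch_ideal_neq_imp_map_upt_neq \<open>I \<noteq> J\<close> by blast
    then have "\<not> compatible rel (reg_node (map f [0..<n])) (reg_node (map f' [0..<n]))"
      by (intro reg_nodes_incompatible) simp_all
    then show ?thesis unfolding I J by (rule bexI[OF bexI[OF _ branch_ideal_mem] branch_ideal_mem])
  next
    fix f m f' assume "I = branch_ideal reg_node f" "J = branch_ideal (reg_copy m) f'"
    then show ?thesis using node_copy by simp
  next
    fix m f f' assume "I = branch_ideal (reg_copy m) f" "J = branch_ideal reg_node f'"
    then show ?thesis using node_copy[of f' m f] compatible_sym by blast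
  next
    fix m f m' f' assume I: "I = branch_ideal (reg_copy m) f" and J: "J = branch_ideal (reg_copy m') f'"
    show ?thesis
    proof (cases "m = m'")
      case True
      then obtain n where "map f [0..<n] \<noteq> map f' [0..<n]"
        using branch_ideal_neq_imp_map_upt_neq \<open>I \<noteq> J\<close> I J by blast
      then have "\<not> compatible rel (reg_copy m (map f [0..<n])) (reg_copy m' (map f' [0..<n]))"
        by (intro reg_copies_incompatible) simp
      then show ?thesis unfolding I J by (rule bexI[OF bexI[OF _ branch_ideal_mem] branch_ideal_mem])
    next
      case False
      then have "\<not> compatible rel (reg_copy m []) (reg_copy m' [])" by (intro reg_copies_incompatible) simp
      then show ?thesis unfolding I J by (rule bexI[OF bexI[OF _ branch_ideal_Nil] branch_ideal_Nil])
    qed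
  qed
qed

lemma top_ideal_separated:
  assumes no3: "\<not> (\<exists>f. branch R3 p f)" and b: "is_top b" and J: "is_ideal rel J" and "J \<noteq> down rel b"
  shows "\<exists>k\<in>down rel b. \<exists>k'\<in>J. \<not> compatible rel k k'"
proof -
  have "\<not> J \<subseteq> down rel b"
    using t1_space_space_rel[OF no3] J is_ideal_down_top[OF b] \<open>J \<noteq> down rel b\<close>
    unfolding t1_space_ideal_space_iff by blast
  then obtain k' where "k' \<in> J" "k' \<notin> down rel b" by blast
  have "\<not> compatible rel b k'"
  proof
    assume "compatible rel b k'"
    then obtain L where L: "is_ideal rel L" "b \<in> L" "k' \<in> L" unfolding compatible_def by blast
    then have "L = down rel b" using ideal_eq_down_top b by simp
    then show False using L(3) \<open>k' \<notin> down rel b\<close> by simp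
  qed
  then show ?thesis using top_in_down[OF b] \<open>k' \<in> J\<close> by blast
qed

lemma Hausdorff_space_space_rel:
  assumes no2: "\<not> (\<exists>f. branch R2 p f)" and no3: "\<not> (\<exists>f. branch R3 p f)"
  shows "Hausdorff_space (ideal_space rel)"
  unfolding Hausdorff_space_ideal_space_iff
proof (intro allI impI)
  have reg: "(\<exists>f. I = branch_ideal reg_node f) \<or> (\<exists>m f. I = branch_ideal (reg_copy m) f)"
    if "is_ideal rel I" "\<not> (\<exists>b. is_top b \<and> I = down rel b)" for I
    using that(1) by (cases rule: ideal_cases) (use that(2) no2 no3 in blast)+
  fix I J assume I: "is_ideal rel I" and J: "is_ideal rel J" and "I \<noteq> J"
  show "\<exists>k\<in>I. \<exists>k'\<in>J. \<not> compatible rel k k'"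
  proof (cases "\<exists>b. is_top b \<and> I = down rel b")
    case True
    then obtain b where "is_top b" "I = down rel b" by blast
    then show ?thesis using top_ideal_separated[OF no3 _ J] \<open>I \<noteq> J\<close> by blast
  next
    case I_not_top: False
    show ?thesis
    proof (cases "\<exists>b. is_top b \<and> J = down rel b")
      case True
      then obtain b where "is_top b" "J = down rel b" by blast
      then obtain k k' where "k \<in> J" "k' \<in> I" "\<not> compatible rel k k'"
        using top_ideal_separated[OF no3 _ I] \<open>I \<noteq> J\<close> by blast
      then show ?thesis using compatible_sym by blast
    next
      case False
      show ?thesis
        using reg_branch_ideals_separated[OF reg[OF I I_not_top] reg[OF J False] \<open>I \<noteq> J\<close>] .
    qed
  qed
qed

lemma not_Hausdorff_space_space_rel:
  assumes f: "branch R2 p f"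
  shows "\<not> Hausdorff_space (ideal_space rel)"
proof -
  let ?I = "branch_ideal haus_node1 f" and ?J = "branch_ideal haus_node2 f"
  have ideals: "is_ideal rel ?I" "is_ideal rel ?J"
    by (rule is_ideal_branch_ideal_rel[OF tree_embeddings(3) f],
        rule is_ideal_branch_ideal_rel[OF tree_embeddings(4) f])
  have "haus_node1 [] \<notin> ?J" by (simp add: branch_ideal_def image_iff)
  then have "?I \<noteq> ?J" using branch_ideal_Nil[of haus_node1 f] by blast
  moreover have "compatible rel k k'" if k: "k \<in> ?I" and k': "k' \<in> ?J" for k k'
  proof -
    obtain i j where ij: "k = haus_node1 (map f [0..<i])" "k' = haus_node2 (map f [0..<j])"
      using k k' unfolding branch_ideal_def by blast
    let ?b = "haus_top (map f [0..<max i j])"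
    have "(k, ?b) \<in> rel" "(k', ?b) \<in> rel"
      unfolding ij by (auto intro!: space_rel.haus_node1_top space_rel.haus_node2_top prefix_map_upt)
    then show ?thesis
      using is_ideal_down_top[of ?b] top_in_down[of ?b] unfolding compatible_def down_def by fastforce
  qed
  ultimately show ?thesis using ideals unfolding Hausdorff_space_ideal_space_iff by blast
qed

lemma not_regular_space_space_rel:
  assumes x: "branch R1 p x"
  shows "\<not> regular_space (ideal_space rel)"
proof
  let ?X = "ideal_space rel"
  assume "regular_space ?X"
  define C where "C = {I. is_ideal rel I \<and> I \<subseteq> range (case_prod reg_copy)}"
  have "closedin ?X C" unfolding C_def by (rule closedin_ideals_subset)
  moreover have "branch_ideal reg_node x \<in> topspace ?X - C"
    using is_ideal_branch_ideal_rel[OF tree_embeddings(1) x] branch_ideal_Nil[of reg_node x]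
    unfolding C_def topspace_ideal_space by auto
  ultimately obtain U V where UV: "openin ?X U" "openin ?X V" "branch_ideal reg_node x \<in> U"
    "C \<subseteq> V" "disjnt U V"
    using \<open>regular_space ?X\<close> unfolding regular_space_def by metis
  obtain k where "k \<in> branch_ideal reg_node x" and k_U: "basic_open rel k \<subseteq> U"
    using ideal_space_open_nbhd UV(1,3) by blast
  then obtain n where k: "k = reg_node (map x [0..<n])" unfolding branch_ideal_def by blast
  have "branch_ideal (reg_copy n) x \<in> C"
    using is_ideal_branch_ideal_rel[OF tree_embeddings(2) x] unfolding C_def branch_ideal_def by auto
  then obtain k' where "k' \<in> branch_ideal (reg_copy n) x" and k'_V: "basic_open rel k' \<subseteq> V"
    using ideal_space_open_nbhd UV(2,4) by blast
  then obtain j where k': "k' = reg_copy n (map x [0..<j])" unfolding branch_ideal_def by blast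
  let ?b = "reg_top n (map x [0..<max j n])"
  have "(k, ?b) \<in> rel"
    unfolding k by (rule space_rel.reg_node_top) (simp add: take_map_upt)
  moreover have "(k', ?b) \<in> rel"
    unfolding k' by (rule space_rel.reg_copy_top) (simp add: prefix_map_upt)
  ultimately have "down rel ?b \<in> basic_open rel k \<inter> basic_open rel k'"
    using is_ideal_down_top[of ?b] unfolding basic_open_def down_def by simp
  then show False using k_U k'_V UV(5) unfolding disjnt_def by blast
qed

lemma not_metrizable_space_space_rel: "branch R1 p x \<Longrightarrow> \<not> metrizable_space (ideal_space rel)"
  using not_regular_space_space_rel metrizable_imp_regular_space by blast

lemma metrizable_space_space_rel:
  assumes "\<not> (\<exists>f. branch R1 p f)" "\<not> (\<exists>f. branch R2 p f)" "\<not> (\<exists>f. branch R3 p f)"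
  shows "metrizable_space (ideal_space rel)"
proof -
  have "ideal_space rel = discrete_topology {I. is_ideal rel I}"
  proof (rule ideal_space_eq_discrete_topology)
    fix I assume "is_ideal rel I"
    then obtain b where "is_top b" "I = down rel b"
      by (cases rule: ideal_cases) (use assms in blast)+
    then show "\<exists>k. basic_open rel k = {I}" using basic_open_top by blast
  qed
  then show ?thesis by (simp add: metrizable_space_discrete_topology)
qed

end

section \<open>Decidability of the construction\<close>

definition prefix_code :: "nat \<Rightarrow> nat \<Rightarrow> bool" where
  "prefix_code c d \<longleftrightarrow> take_code d (length_code c) = c"

definition in_tree_code :: "(nat \<Rightarrow> nat) \<Rightarrow> nat \<Rightarrow> nat \<Rightarrow> bool" where
  "in_tree_code R p c \<longleftrightarrow> (\<forall>i<Suc (length_code c). R (prod_encode (p, take_code c i)) \<noteq> 0)"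

lemma prefix_code_list_encode [simp]: "prefix_code (list_encode s) (list_encode t) \<longleftrightarrow> prefix s t"
  unfolding prefix_code_def prefix_iff_take by simp

lemma in_tree_code_list_encode [simp]: "in_tree_code R p (list_encode t) \<longleftrightarrow> in_tree R p t"
  unfolding in_tree_code_def in_tree_def by (auto simp: less_Suc_eq_le)

definition space_edge :: "(nat \<Rightarrow> nat) \<Rightarrow> (nat \<Rightarrow> nat) \<Rightarrow> (nat \<Rightarrow> nat) \<Rightarrow> nat \<Rightarrow> nat \<Rightarrow> nat \<Rightarrow> bool" where
  "space_edge R1 R2 R3 p i j \<longleftrightarrow>
    (let t = fst (prod_decode i); d = snd (prod_decode i); t' = fst (prod_decode j); d' = snd (prod_decode j);
         m = fst (prod_decode d); c = snd (prod_decode d); m' = fst (prod_decode d'); c' = snd (prod_decode d') in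
     (t = 0 \<and> t' = 0 \<and> prefix_code d d' \<and> d \<noteq> d' \<and> in_tree_code R1 p d') \<or>
     (t = 2 \<and> t' = 2 \<and> m = m' \<and> prefix_code c c' \<and> c \<noteq> c' \<and> in_tree_code R1 p c') \<or>
     (t = 2 \<and> t' = 3 \<and> m = m' \<and> prefix_code c c') \<or>
     (t = 0 \<and> t' = 3 \<and> prefix_code d (take_code c' m')) \<or>
     (t = 3 \<and> t' = 3 \<and> d = d') \<or>
     (t = 4 \<and> t' = 4 \<and> prefix_code d d' \<and> d \<noteq> d' \<and> in_tree_code R2 p d') \<or>
     (t = 5 \<and> t' = 5 \<and> prefix_code d d' \<and> d \<noteq> d' \<and> in_tree_code R2 p d') \<or>
     (t = 4 \<and> t' = 6 \<and> prefix_code d d') \<or>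
     (t = 5 \<and> t' = 6 \<and> prefix_code d d') \<or>
     (t = 6 \<and> t' = 6 \<and> d = d') \<or>
     (t = 7 \<and> t' = 7 \<and> prefix_code d d' \<and> d \<noteq> d' \<and> in_tree_code R3 p d') \<or>
     (t = 7 \<and> t' = 8) \<or>
     (t = 8 \<and> t' = 8 \<and> d = d') \<or>
     ((t = 1 \<or> 9 \<le> t) \<and> t' = t \<and> d = d'))"

lemma space_rel_imp_space_edge: "(i, j) \<in> space_rel R1 R2 R3 p \<Longrightarrow> space_edge R1 R2 R3 p i j"
  by (erule space_rel.cases) (auto simp: space_edge_def strict_prefix_def)

lemma space_edge_imp_space_rel:
  assumes "space_edge R1 R2 R3 p i j"
  shows "(i, j) \<in> space_rel R1 R2 R3 p"
proof -
  obtain t d where i: "i = prod_encode (t, d)" by (rule nat_prod_encode_cases)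
  obtain t' d' where j: "j = prod_encode (t', d')" by (rule nat_prod_encode_cases)
  obtain s s' where s: "d = list_encode s" "d' = list_encode s'" by (metis nat_list_encode_cases)
  obtain m u m' u' where u: "d = prod_encode (m, list_encode u)" "d' = prod_encode (m', list_encode u')"
    by (metis nat_prod_encode_cases nat_list_encode_cases)
  from assms show ?thesis
    unfolding space_edge_def Let_def i j prod_encode_inverse fst_conv snd_conv
    by (elim disjE conjE; (force simp: s strict_prefix_def intro: space_rel.intros
        | force simp: u strict_prefix_def intro: space_rel.intros
        | force simp: s(1) u(2) intro: space_rel.intros))
qed

lemma space_rel_iff_space_edge: "(i, j) \<in> space_rel R1 R2 R3 p \<longleftrightarrow> space_edge R1 R2 R3 p i j"
  using space_rel_imp_space_edge space_edge_imp_space_rel by blast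

lemma rec_pred_prefix_code: "rec_fn k A \<Longrightarrow> rec_fn k B \<Longrightarrow> rec_pred k (\<lambda>xs. prefix_code (A xs) (B xs))"
  unfolding prefix_code_def by (intro rec_pred_eq rec_fn_take_code rec_fn_length_code)

lemma rec_pred_in_tree_code:
  assumes R: "rec_fn 1 (\<lambda>xs. R (xs ! 0))" and P: "rec_fn k P" and C: "rec_fn k C"
  shows "rec_pred k (\<lambda>xs. in_tree_code R (P xs) (C xs))"
  unfolding in_tree_code_def
proof (rule rec_pred_all_less)
  show "rec_pred (Suc k) (\<lambda>ys. R (prod_encode (P (tl ys), take_code (C (tl ys)) (hd ys))) \<noteq> 0)"
    using rec_fn_comp1[OF R rec_fn_prod_encode[OF rec_fn_tl_args[OF P]
        rec_fn_take_code[OF rec_fn_tl_args[OF C] rec_fn_hd]]]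
    by (intro rec_pred_not rec_pred_eq rec_fn_const) simp_all
  show "rec_fn k (\<lambda>xs. Suc (length_code (C xs)))" by (intro rec_fn_Suc rec_fn_length_code C)
qed simp

lemma rec_pred_space_edge:
  assumes "computable R1" "computable R2" "computable R3"
  shows "rec_pred 2 (\<lambda>xs. space_edge R1 R2 R3 (xs ! 0) (fst (prod_decode (xs ! 1))) (snd (prod_decode (xs ! 1))))"
  using assms[THEN rec_fn_computable] unfolding space_edge_def Let_def
  by (intro rec_pred_disj rec_pred_conj rec_pred_eq rec_pred_le rec_pred_not rec_pred_prefix_code
      rec_pred_in_tree_code rec_fn_fst_prod_decode rec_fn_snd_prod_decode rec_fn_proj rec_fn_const
      rec_fn_take_code; simp)

lemma space_rel_uniformly_ce:
  assumes "computable R1" "computable R2" "computable R3"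
  obtains g where "computable g" "\<And>p. V (g p) = space_rel R1 R2 R3 p"
proof -
  obtain g where g: "computable g"
    "\<And>p. W (g p) = {x. space_edge R1 R2 R3 p (fst (prod_decode x)) (snd (prod_decode x))}"
    using uniformly_ce_sections[OF rec_pred_space_edge[OF assms]] by auto
  have "V (g p) = space_rel R1 R2 R3 p" for p
    unfolding V_def g(2) by (auto simp: space_rel_iff_space_edge)
  with g(1) show ?thesis using that by blast
qed

theorem theorem26:
  fixes M H F :: "nat set"
  assumes "pi11 M" and "pi11 H" and "pi11 F"
    and "M \<subseteq> H" and "H \<subseteq> F"
  shows "\<exists>g. computable g \<and> (\<forall>p. iota_ce (g p)
     \<and> (p \<in> M \<longrightarrow> metrizable_space (iota (g p)))
     \<and> (p \<in> H - M \<longrightarrow> Hausdorff_space (iota (g p)) \<and> \<not> metrizable_space (iota (g p)))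
     \<and> (p \<in> F - H \<longrightarrow> t1_space (iota (g p)) \<and> \<not> Hausdorff_space (iota (g p)))
     \<and> (p \<notin> F \<longrightarrow> \<not> t1_space (iota (g p))))"
proof -
  obtain R1 where R1: "computable R1" "\<And>p. p \<in> M \<longleftrightarrow> \<not> (\<exists>f. branch R1 p f)"
    using pi11_imp_branch_free_trees[OF assms(1)] by blast
  obtain R2 where R2: "computable R2" "\<And>p. p \<in> H \<longleftrightarrow> \<not> (\<exists>f. branch R2 p f)"
    using pi11_imp_branch_free_trees[OF assms(2)] by blast
  obtain R3 where R3: "computable R3" "\<And>p. p \<in> F \<longleftrightarrow> \<not> (\<exists>f. branch R3 p f)"
    using pi11_imp_branch_free_trees[OF assms(3)] by blast
  obtain g where g: "computable g" "\<And>p. V (g p) = space_rel R1 R2 R3 p"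
    using space_rel_uniformly_ce[OF R1(1) R2(1) R3(1)] by blast
  have iota: "iota (g p) = ideal_space (space_rel R1 R2 R3 p)" for p
    unfolding iota_def g(2) trans_space_rel[THEN trancl_id] ..
  have "iota_ce (g p)" for p
    unfolding iota_ce_def g(2) trans_space_rel[THEN trancl_id] using basic_open_nonempty ce_UNIV by simp
  moreover have "(p \<in> M \<longrightarrow> metrizable_space (iota (g p)))
     \<and> (p \<in> H - M \<longrightarrow> Hausdorff_space (iota (g p)) \<and> \<not> metrizable_space (iota (g p)))
     \<and> (p \<in> F - H \<longrightarrow> t1_space (iota (g p)) \<and> \<not> Hausdorff_space (iota (g p)))
     \<and> (p \<notin> F \<longrightarrow> \<not> t1_space (iota (g p)))" for p
    using R1(2)[of p] R2(2)[of p] R3(2)[of p] assms(4,5) unfolding iota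
    by (auto simp: metrizable_space_space_rel Hausdorff_space_space_rel t1_space_space_rel
        dest: not_metrizable_space_space_rel not_Hausdorff_space_space_rel not_t1_space_space_rel)
  ultimately show ?thesis using g(1) by blast
qed

end
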